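(* For every $n\ge 2$ and all nonnegative integers $l_1,\dots,l_n,l_\infty$, the rule described in the context (each generator $s_{p,q}$ acting by reflecting the region cut off by a shear chord and reconnecting arcs, and words acting right to left) defines a group action of the cactus group $J_n$ on $X(l_1,\dots,l_n,l_\infty)$. In particular the operations satisfy $s_{p,q}^2=\mathrm{id}$, $s_{p,q}s_{p',q'}=s_{p',q'}s_{p,q}$ when $[p,q]\cap[p',q']=\emptyset$, and $s_{p,q}s_{p',q'}s_{p,q}=s_{p+q-q',\,p+q-p'}$ when $p\le p'<q'\le q$.
   Context: Cactus group: $J_n$ is the group generated by $s_{p,q}$, $1\le p<q\le n$, subject to the relations $s_{p,q}^2=e$; $s_{p,q}s_{p',q'}=s_{p',q'}s_{p,q}$ if $[p,q]$ and $[p',q']$ are disjoint; $s_{p,q}s_{p',q'}s_{p,q}=s_{p+q-q',p+q-p'}$ if $p\le p'<q'\le q$. Arc diagrams: fix nonnegative integers $l_1,\dots,l_n,l_\infty$. On the boundary circle of a closed disc place $n+1$ marked positions: position $0$ (occupied by the distinguished point $z_\infty$) and positions $1,\dots,n$ following it in clockwise order. An arc diagram consists of a bijective assignment of the labels $z_1,\dots,z_n$ to the positions $1,\dots,n$, together with a finite collection of simple arcs in the disc, pairwise disjoint except possibly at endpoints, each joining two distinct marked points, such that the point labelled $z_j$ is an endpoint of exactly $l_j$ arcs for each $j\in\{1,\dots,n,\infty\}$ ($l_j$ is the valence of $z_j$). Parallel arcs between the same two points are allowed. Diagrams are considered up to isotopy fixing the marked points; equivalently a diagram is determined by the labelling and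 the number of arcs joining each pair of marked points. $X(l_1,\dots,l_n,l_\infty)$ is the set of all such diagrams. Action: for $1\le p<q\le n$ and a diagram $x$, choose a chord $\ell$ (the shear line) separating positions $p,\dots,q$ from all other marked points, and isotope the arcs so that each crosses $\ell$ at most once, transversally. Let $R$ be the part of the disc cut off by $\ell$ containing positions $p,\dots,q$. Apply to $R$ the reflection mapping $\ell$ to itself with orientation reversed (so the label at position $p+t$ moves to position $q-t$, and the order of the crossing points on $\ell$ is reversed), leave the complement of $R$ unchanged, and glue the arc pieces back together at the crossing points of $\ell$. The resulting diagram is $s_{p,q}x$. A word $s_{p_k,q_k}\cdots s_{p_1,q_1}$ acts by applying $s_{p_1,q_1}$ first, then $s_{p_2,q_2}$, and so on. *)

theory Defs
  imports Main
begin

text \<open>A diagram is a pair (sigma, m): sigma k is the index j of the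
label z_j sitting at position k (for 1 \<le> k \<le> n); by convention sigma k = k for
positions outside 1..n (so position 0 carries z_infinity).  m i j is the number of
arcs joining the marked points at positions i and j (0 \<le> i,j \<le> n).\<close>

type_synonym diagram = "(nat \<Rightarrow> nat) \<times> (nat \<Rightarrow> nat \<Rightarrow> nat)"

definition arc_diagrams :: "nat \<Rightarrow> (nat \<Rightarrow> nat) \<Rightarrow> nat \<Rightarrow> diagram set" where
  "arc_diagrams n l linf = {(\<sigma>, m).
     bij_betw \<sigma> {1..n} {1..n} \<and> (\<forall>k. k \<notin> {1..n} \<longrightarrow> \<sigma> k = k) \<and>
     (\<forall>i j. m i j = m j i) \<and> (\<forall>i. m i i = 0) \<and>
     (\<forall>i j. n < i \<or> n < j \<longrightarrow> m i j = 0) \<and>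
     (\<forall>a b c d. a < c \<and> c < b \<and> b < d \<longrightarrow> m a b = 0 \<or> m c d = 0) \<and>
     (\<forall>i\<in>{1..n}. (\<Sum>k\<le>n. m i k) = l (\<sigma> i)) \<and>
     (\<Sum>k\<le>n. m 0 k) = linf}"

definition refl_pos :: "nat \<Rightarrow> nat \<Rightarrow> nat \<Rightarrow> nat" where
  "refl_pos p q k = (if p \<le> k \<and> k \<le> q then p + q - k else k)"

text \<open>Outer positions in the order in which their arcs meet the shear line, starting
from the end of the shear line lying between positions p-1 and p.\<close>
definition outer_order :: "nat \<Rightarrow> nat \<Rightarrow> nat \<Rightarrow> nat list" where
  "outer_order n p q = rev [0..<p] @ rev [q+1..<n+1]"

text \<open>Arcs crossing the shear line, listed as (inner endpoint, outer endpoint) in the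
order of their crossing points along the shear line.\<close>
definition crossing_list :: "nat \<Rightarrow> nat \<Rightarrow> nat \<Rightarrow> (nat \<Rightarrow> nat \<Rightarrow> nat) \<Rightarrow> (nat \<times> nat) list" where
  "crossing_list n p q m =
     concat (map (\<lambda>i. concat (map (\<lambda>r. replicate (m i r) (i, r)) (outer_order n p q))) [p..<q+1])"

text \<open>After reflecting R, the k-th crossing point (from the same end) carries the outer
piece of the k-th crossing arc and the reflected inner piece of the (reverse) k-th arc.
Result: list of (outer endpoint, new inner endpoint).\<close>
definition new_crossing :: "nat \<Rightarrow> nat \<Rightarrow> nat \<Rightarrow> (nat \<Rightarrow> nat \<Rightarrow> nat) \<Rightarrow> (nat \<times> nat) list" where
  "new_crossing n p q m =
     (let L = crossing_list n p q m in
      zip (map snd L) (map (\<lambda>(i, r). p + q - i) (rev L)))"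

definition shear :: "nat \<Rightarrow> nat \<times> nat \<Rightarrow> diagram \<Rightarrow> diagram" where
  "shear n g x = (case g of (p, q) \<Rightarrow> case x of (\<sigma>, m) \<Rightarrow>
     (let ins = (\<lambda>k. p \<le> k \<and> k \<le> q);
          N = new_crossing n p q m;
          cnt = (\<lambda>r i. length (filter (\<lambda>e. e = (r, i)) N))
      in (\<lambda>k. \<sigma> (refl_pos p q k),
          \<lambda>i j. if ins i = ins j then m (refl_pos p q i) (refl_pos p q j)
                else if ins i then cnt j i else cnt i j)))"

text \<open>A word s_{p_k,q_k} ... s_{p_1,q_1} is the list [(p_k,q_k),...,(p_1,q_1)];
the rightmost letter acts first.\<close>
fun act_word :: "nat \<Rightarrow> (nat \<times> nat) list \<Rightarrow> diagram \<Rightarrow> diagram" where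
  "act_word n [] x = x"
| "act_word n (g # w) x = shear n g (act_word n w x)"

definition cactus_gen :: "nat \<Rightarrow> nat \<times> nat \<Rightarrow> bool" where
  "cactus_gen n g = (1 \<le> fst g \<and> fst g < snd g \<and> snd g \<le> n)"

inductive cactus_rel :: "nat \<Rightarrow> (nat \<times> nat) list \<Rightarrow> (nat \<times> nat) list \<Rightarrow> bool" for n where
  invol: "cactus_gen n (p, q) \<Longrightarrow> cactus_rel n [(p, q), (p, q)] []"
| comm: "cactus_gen n (p, q) \<Longrightarrow> cactus_gen n (p', q') \<Longrightarrow> q < p' \<or> q' < p \<Longrightarrow>
     cactus_rel n [(p, q), (p', q')] [(p', q'), (p, q)]"
| nest: "cactus_gen n (p, q) \<Longrightarrow> p \<le> p' \<Longrightarrow> p' < q' \<Longrightarrow> q' \<le> q \<Longrightarrow>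
     cactus_rel n [(p, q), (p', q'), (p, q)] [(p + q - q', p + q - p')]"

text \<open>Equality in J_n: the congruence on words in the generators generated by the
defining relations (J_n = words modulo this congruence; it is a group since all
generators are involutions).\<close>
inductive cactus_eq :: "nat \<Rightarrow> (nat \<times> nat) list \<Rightarrow> (nat \<times> nat) list \<Rightarrow> bool" for n where
  refl: "list_all (cactus_gen n) w \<Longrightarrow> cactus_eq n w w"
| rel: "cactus_rel n u v \<Longrightarrow> list_all (cactus_gen n) a \<Longrightarrow> list_all (cactus_gen n) b \<Longrightarrow>
     cactus_eq n (a @ u @ b) (a @ v @ b)"
| sym: "cactus_eq n u v \<Longrightarrow> cactus_eq n v u"
| trans: "cactus_eq n u v \<Longrightarrow> cactus_eq n v w \<Longrightarrow> cactus_eq n u w"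

end

theory Submission
  imports Defs
begin

text \<open>A diagram is encoded by its labelling and the symmetric matrix of arc multiplicities,
  which is noncrossing.  Such a matrix is determined by the cut weights of the intervals
  \<open>[a, b] \<subseteq> [1, n]\<close> (the numbers of arcs leaving them): \<open>2 m i j\<close> is an alternating sum of four
  interval cuts.  For the cut of an interval straddling a block \<open>[p, q]\<close>, noncrossingness shows
  that it is determined by cuts of intervals nested with or disjoint from \<open>[p, q]\<close>.  On these
  compatible intervals the shear \<open>s\<^sub>p\<^sub>,\<^sub>q\<close> acts by relabelling: an interval inside the block
  takes the cut of its mirror image, every other one keeps its cut, because each arc crossing
  the shear line is reconnected to exactly one arc crossing it.  Hence both sides of each
  defining relation of \<open>J\<^sub>n\<close> have equal cuts on the intervals compatible with the blocks
  involved, and so they agree.  That the sheared arcs are again noncrossing comes from the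
  reversal of the order of the crossing points along the shear line.\<close>

definition sym_matrix :: "(nat \<Rightarrow> nat \<Rightarrow> nat) \<Rightarrow> bool" where
  "sym_matrix m \<longleftrightarrow> (\<forall>i j. m i j = m j i)"

definition arc_matrix :: "nat \<Rightarrow> (nat \<Rightarrow> nat \<Rightarrow> nat) \<Rightarrow> bool" where
  "arc_matrix n m \<longleftrightarrow> sym_matrix m \<and> (\<forall>i. m i i = 0) \<and> (\<forall>i j. n < i \<or> n < j \<longrightarrow> m i j = 0)"

definition noncrossing :: "(nat \<Rightarrow> nat \<Rightarrow> nat) \<Rightarrow> bool" where
  "noncrossing m \<longleftrightarrow> (\<forall>a b c d. a < c \<and> c < b \<and> b < d \<longrightarrow> m a b = 0 \<or> m c d = 0)"

lemma noncrossingD: "noncrossing m \<Longrightarrow> a < c \<Longrightarrow> c < b \<Longrightarrow> b < d \<Longrightarrow> m a b = 0 \<or> m c d = 0"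
  unfolding noncrossing_def by metis

lemma sym_matrixD: "sym_matrix m \<Longrightarrow> m i j = m j i"
  unfolding sym_matrix_def by blast

lemma arc_matrix_sym: "arc_matrix n m \<Longrightarrow> sym_matrix m"
  unfolding arc_matrix_def by blast

lemma arc_diagrams_arc_matrix:
  "(\<sigma>, m) \<in> arc_diagrams n l linf \<Longrightarrow> arc_matrix n m \<and> noncrossing m"
  unfolding arc_diagrams_def arc_matrix_def sym_matrix_def noncrossing_def by auto

definition strictly_between :: "nat \<Rightarrow> nat \<Rightarrow> nat \<Rightarrow> bool" where
  "strictly_between z x y \<longleftrightarrow> x < z \<and> z < y \<or> y < z \<and> z < x"

definition chords_cross :: "nat \<Rightarrow> nat \<Rightarrow> nat \<Rightarrow> nat \<Rightarrow> bool" where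
  "chords_cross x y u v \<longleftrightarrow> u \<notin> {x, y} \<and> v \<notin> {x, y} \<and>
     strictly_between u x y \<noteq> strictly_between v x y"

lemma chords_cross_commute: "chords_cross x y u v \<longleftrightarrow> chords_cross u v x y"
  unfolding chords_cross_def strictly_between_def by auto

lemma chords_cross_swap: "chords_cross x y u v \<longleftrightarrow> chords_cross y x u v"
  unfolding chords_cross_def strictly_between_def by auto

lemma chords_crossI: "a < c \<Longrightarrow> c < b \<Longrightarrow> b < d \<Longrightarrow> chords_cross a b c d"
  unfolding chords_cross_def strictly_between_def by auto

lemma chords_cross_outside: "x < u \<Longrightarrow> u < y \<Longrightarrow> w < x \<or> y < w \<Longrightarrow> chords_cross x y u w"
  unfolding chords_cross_def strictly_between_def by auto

lemma chords_cross_ordered: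
  "chords_cross x y u v \<Longrightarrow> x < y \<Longrightarrow> x < u \<Longrightarrow> u < v \<Longrightarrow> u < y \<and> y < v"
  unfolding chords_cross_def strictly_between_def by auto

lemma chords_cross_min_max:
  "chords_cross x y u v \<longleftrightarrow> chords_cross (min x y) (max x y) (min u v) (max u v)"
  unfolding chords_cross_def strictly_between_def by (auto simp: min_def max_def)

lemma noncrossing_not_chords_cross:
  assumes sym: "sym_matrix m" and nc: "noncrossing m" and xy: "m x y \<noteq> 0" and uv: "m u v \<noteq> 0"
  shows "\<not> chords_cross x y u v"
proof
  have ordered: False
    if "m a b \<noteq> 0" "m c d \<noteq> 0" "a < b" "c < d" "a < c" "chords_cross a b c d" for a b c d
  proof -
    have "c < b" "b < d" using chords_cross_ordered[OF that(6,3,5,4)] by auto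
    then show False using noncrossingD[OF nc that(5) \<open>c < b\<close> \<open>b < d\<close>] that(1,2) by simp
  qed
  assume xyuv: "chords_cross x y u v"
  then have cross: "chords_cross (min x y) (max x y) (min u v) (max u v)"
    by (rule chords_cross_min_max[THEN iffD1])
  have "x \<noteq> y" "u \<noteq> v" "u \<notin> {x, y}" "v \<notin> {x, y}"
    using xyuv unfolding chords_cross_def strictly_between_def by auto
  then have lt: "min x y < max x y" "min u v < max u v" "min x y \<noteq> min u v"
    by (auto simp: min_def max_def)
  have m: "m (min x y) (max x y) \<noteq> 0" "m (min u v) (max u v) \<noteq> 0"
    using xy uv sym_matrixD[OF sym, of x y] sym_matrixD[OF sym, of u v]
    by (simp_all add: min_def max_def)
  show False
  proof (cases "min x y < min u v")
    case True
    then show False using ordered[OF m lt(1,2) True cross] by simp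
  next
    case False
    then have "min u v < min x y" using lt(3) by (meson linorder_neqE_nat)
    then show False using ordered[OF m(2,1) lt(2,1)] cross chords_cross_commute by blast
  qed
qed

lemma strictly_between_reflect:
  "x \<le> s \<Longrightarrow> y \<le> s \<Longrightarrow> z \<le> s \<Longrightarrow>
   strictly_between (s - z) (s - x) (s - y) \<longleftrightarrow> strictly_between z x y"
  unfolding strictly_between_def by linarith

lemma chords_cross_reflect:
  assumes "x \<le> s" "y \<le> s" "u \<le> s" "v \<le> s" "chords_cross x y u v"
  shows "chords_cross (s - x) (s - y) (s - u) (s - v)"
  using assms unfolding chords_cross_def by (auto simp: strictly_between_reflect)

lemma strictly_between_interval_cong:
  "x \<notin> {p..q} \<Longrightarrow> y \<notin> {p..q} \<Longrightarrow> i \<in> {p..q} \<Longrightarrow> j \<in> {p..q} \<Longrightarrow>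
   strictly_between i x y \<longleftrightarrow> strictly_between j x y"
  unfolding strictly_between_def by (simp, linarith)

lemma not_strictly_between_interval:
  "x \<in> {p..q} \<Longrightarrow> y \<in> {p..q} \<Longrightarrow> r \<notin> {p..q} \<Longrightarrow> \<not> strictly_between r x y"
  unfolding strictly_between_def by (simp, linarith)

definition arcs_between :: "(nat \<Rightarrow> nat \<Rightarrow> nat) \<Rightarrow> nat set \<Rightarrow> nat set \<Rightarrow> nat" where
  "arcs_between m A B = (\<Sum>x\<in>A. \<Sum>y\<in>B. m x y)"

definition cut_weight :: "nat \<Rightarrow> (nat \<Rightarrow> nat \<Rightarrow> nat) \<Rightarrow> nat set \<Rightarrow> nat" where
  "cut_weight n m S = arcs_between m S ({..n} - S)"

lemma arcs_between_commute: "sym_matrix m \<Longrightarrow> arcs_between m B A = arcs_between m A B"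
  unfolding arcs_between_def sym_matrix_def by (subst sum.swap) simp

lemma arcs_between_Un_left:
  "finite A \<Longrightarrow> finite B \<Longrightarrow> A \<inter> B = {} \<Longrightarrow>
   arcs_between m (A \<union> B) C = arcs_between m A C + arcs_between m B C"
  unfolding arcs_between_def by (simp add: sum.union_disjoint)

lemma arcs_between_Un_right:
  "finite B \<Longrightarrow> finite C \<Longrightarrow> B \<inter> C = {} \<Longrightarrow>
   arcs_between m A (B \<union> C) = arcs_between m A B + arcs_between m A C"
  unfolding arcs_between_def by (simp add: sum.union_disjoint sum.distrib)

lemma arcs_between_eq_0_if_cross:
  assumes sym: "sym_matrix m" and nc: "noncrossing m"
    and cross: "\<And>x y u w. x \<in> X \<Longrightarrow> y \<in> Y \<Longrightarrow> u \<in> Z \<Longrightarrow> w \<in> W \<Longrightarrow> chords_cross x y u w"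
  shows "arcs_between m X Y = 0 \<or> arcs_between m Z W = 0"
proof (rule ccontr)
  assume "\<not> ?thesis"
  then have "(\<Sum>x\<in>X. \<Sum>y\<in>Y. m x y) \<noteq> 0" "(\<Sum>u\<in>Z. \<Sum>w\<in>W. m u w) \<noteq> 0"
    unfolding arcs_between_def by auto
  then obtain x y u w where "x \<in> X" "y \<in> Y" "m x y \<noteq> 0" "u \<in> Z" "w \<in> W" "m u w \<noteq> 0"
    by (meson sum.not_neutral_contains_not_neutral)
  then show False using noncrossing_not_chords_cross[OF sym nc] cross by blast
qed

lemma cut_weight_Un:
  assumes sym: "sym_matrix m" and "A \<inter> B = {}" and "A \<union> B \<subseteq> {..n}"
  shows "cut_weight n m (A \<union> B) + 2 * arcs_between m A B = cut_weight n m A + cut_weight n m B"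
proof -
  have fin: "finite A" "finite B" using assms(3) finite_subset by auto
  let ?R = "{..n} - (A \<union> B)"
  have "{..n} - A = ?R \<union> B" "{..n} - B = ?R \<union> A" using assms(2,3) by auto
  then have "cut_weight n m A = arcs_between m A ?R + arcs_between m A B"
    and "cut_weight n m B = arcs_between m B ?R + arcs_between m B A"
    unfolding cut_weight_def using fin assms(2) by (auto intro: arcs_between_Un_right)
  moreover have "cut_weight n m (A \<union> B) = arcs_between m A ?R + arcs_between m B ?R"
    unfolding cut_weight_def using fin assms(2) by (auto intro: arcs_between_Un_left)
  ultimately show ?thesis using arcs_between_commute[OF sym, of A B] by simp
qed

lemma cut_weight_complement:
  "sym_matrix m \<Longrightarrow> S \<subseteq> {..n} \<Longrightarrow> cut_weight n m ({..n} - S) = cut_weight n m S"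
proof -
  assume "sym_matrix m" "S \<subseteq> {..n}"
  then have "{..n} - ({..n} - S) = S" by auto
  then show ?thesis unfolding cut_weight_def using arcs_between_commute[OF \<open>sym_matrix m\<close>] by simp
qed

lemma cut_weight_singleton:
  assumes "m i i = 0" "i \<le> n"
  shows "cut_weight n m {i} = (\<Sum>k\<le>n. m i k)"
  using assms by (simp add: cut_weight_def arcs_between_def sum.remove[of "{..n}" i])

section \<open>Interval cuts determine a noncrossing matrix\<close>

text \<open>The minimum is the number of arcs between \<open>A\<close> and \<open>B\<close>: an arc from \<open>A\<close> to \<open>D\<close> and an arc
  from \<open>B\<close> leaving \<open>A \<union> B \<union> D\<close> would cross.\<close>
lemma cut_weight_Un_overlap:
  assumes sym: "sym_matrix m" and nc: "noncrossing m"
    and disj: "A \<inter> B = {}" "A \<inter> D = {}" "B \<inter> D = {}" and sub: "A \<union> B \<union> D \<subseteq> {..n}"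
    and cross: "\<And>x y u w. x \<in> A \<Longrightarrow> y \<in> D \<Longrightarrow> u \<in> B \<Longrightarrow> w \<in> {..n} - (A \<union> B \<union> D) \<Longrightarrow>
      chords_cross x y u w"
  shows "cut_weight n m (A \<union> B) +
           2 * min (arcs_between m A (B \<union> D)) (arcs_between m B ({..n} - (B \<union> D)))
         = cut_weight n m A + cut_weight n m B"
    and "cut_weight n m (A \<union> (B \<union> D)) + 2 * arcs_between m A (B \<union> D)
         = cut_weight n m A + cut_weight n m (B \<union> D)"
    and "cut_weight n m B + cut_weight n m (B \<union> D)
         = cut_weight n m D + 2 * arcs_between m B ({..n} - (B \<union> D))"
proof -
  have fin: "finite A" "finite B" "finite D" using sub finite_subset by auto
  let ?R = "{..n} - (A \<union> B \<union> D)"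
  have "{..n} - (B \<union> D) = A \<union> ?R" "{..n} - B = D \<union> ({..n} - (B \<union> D))" using sub disj by auto
  then have AK: "arcs_between m A (B \<union> D) = arcs_between m A B + arcs_between m A D"
    and BK: "arcs_between m B ({..n} - (B \<union> D)) = arcs_between m B A + arcs_between m B ?R"
    and cut_B: "cut_weight n m B = arcs_between m B D + arcs_between m B ({..n} - (B \<union> D))"
    unfolding cut_weight_def using fin disj by (auto intro: arcs_between_Un_right)
  have "arcs_between m A D = 0 \<or> arcs_between m B ?R = 0"
    by (rule arcs_between_eq_0_if_cross[OF sym nc cross])
  then have "min (arcs_between m A (B \<union> D)) (arcs_between m B ({..n} - (B \<union> D)))
      = arcs_between m A B"
    using AK BK arcs_between_commute[OF sym, of A B] by auto
  then show "cut_weight n m (A \<union> B) +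
           2 * min (arcs_between m A (B \<union> D)) (arcs_between m B ({..n} - (B \<union> D)))
         = cut_weight n m A + cut_weight n m B"
    using cut_weight_Un[OF sym disj(1)] sub by auto
  show "cut_weight n m (A \<union> (B \<union> D)) + 2 * arcs_between m A (B \<union> D)
         = cut_weight n m A + cut_weight n m (B \<union> D)"
    using cut_weight_Un[OF sym, of A "B \<union> D"] disj sub by auto
  have "cut_weight n m (B \<union> D) + 2 * arcs_between m B D = cut_weight n m B + cut_weight n m D"
    using cut_weight_Un[OF sym disj(3)] sub by auto
  then show "cut_weight n m B + cut_weight n m (B \<union> D)
         = cut_weight n m D + 2 * arcs_between m B ({..n} - (B \<union> D))"
    using cut_B by linarith
qed

lemma cut_weight_Un_eq_if_overlap:
  assumes "arc_matrix n m1" "noncrossing m1" "arc_matrix n m2" "noncrossing m2"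
    and disj: "A \<inter> B = {}" "A \<inter> D = {}" "B \<inter> D = {}" and sub: "A \<union> B \<union> D \<subseteq> {..n}"
    and cross: "\<And>x y u w. x \<in> A \<Longrightarrow> y \<in> D \<Longrightarrow> u \<in> B \<Longrightarrow> w \<in> {..n} - (A \<union> B \<union> D) \<Longrightarrow>
      chords_cross x y u w"
    and eq: "cut_weight n m1 A = cut_weight n m2 A" "cut_weight n m1 B = cut_weight n m2 B"
      "cut_weight n m1 D = cut_weight n m2 D" "cut_weight n m1 (B \<union> D) = cut_weight n m2 (B \<union> D)"
      "cut_weight n m1 (A \<union> B \<union> D) = cut_weight n m2 (A \<union> B \<union> D)"
  shows "cut_weight n m1 (A \<union> B) = cut_weight n m2 (A \<union> B)"
proof -
  note O1 = cut_weight_Un_overlap[OF arc_matrix_sym[OF assms(1)] assms(2) disj sub cross]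
  note O2 = cut_weight_Un_overlap[OF arc_matrix_sym[OF assms(3)] assms(4) disj sub cross]
  have "A \<union> (B \<union> D) = A \<union> B \<union> D" by auto
  then have "arcs_between m1 A (B \<union> D) = arcs_between m2 A (B \<union> D)"
    and "arcs_between m1 B ({..n} - (B \<union> D)) = arcs_between m2 B ({..n} - (B \<union> D))"
    using O1(2,3) O2(2,3) eq by simp_all
  then show ?thesis using O1(1) O2(1) eq(1,2) by simp
qed

lemma cut_weight_interval_eq_left:
  assumes "arc_matrix n m1" "noncrossing m1" "arc_matrix n m2" "noncrossing m2"
    and ab: "a < p" "p \<le> b" "b < q" "q \<le> n"
    and eq: "cut_weight n m1 {a..p-1} = cut_weight n m2 {a..p-1}"
      "cut_weight n m1 {p..b} = cut_weight n m2 {p..b}"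
      "cut_weight n m1 {b+1..q} = cut_weight n m2 {b+1..q}"
      "cut_weight n m1 {p..q} = cut_weight n m2 {p..q}"
      "cut_weight n m1 {a..q} = cut_weight n m2 {a..q}"
  shows "cut_weight n m1 {a..b} = cut_weight n m2 {a..b}"
proof -
  have sets: "{a..p-1} \<union> {p..b} = {a..b}" "{p..b} \<union> {b+1..q} = {p..q}"
    "{a..p-1} \<union> {p..b} \<union> {b+1..q} = {a..q}" using ab by auto
  have cross: "chords_cross x y u w"
    if "x \<in> {a..p-1}" "y \<in> {b+1..q}" "u \<in> {p..b}" "w \<in> {..n} - ({a..p-1} \<union> {p..b} \<union> {b+1..q})"
    for x y u w
  proof (rule chords_cross_outside)
    show "x < u" "u < y" using that(1-3) ab by auto
    have "w \<notin> {a..q}" using that(4) unfolding sets(3) by blast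
    then show "w < x \<or> y < w" using that(1,2) by auto
  qed
  have disj: "{a..p-1} \<inter> {p..b} = {}" "{a..p-1} \<inter> {b+1..q} = {}" "{p..b} \<inter> {b+1..q} = {}"
    using ab by auto
  have sub: "{a..p-1} \<union> {p..b} \<union> {b+1..q} \<subseteq> {..n}" using ab unfolding sets(3) by auto
  show ?thesis
    using cut_weight_Un_eq_if_overlap[OF assms(1-4) disj sub cross eq(1,2,3)
        eq(4)[folded sets(2)] eq(5)[folded sets(3)]]
    unfolding sets(1) .
qed

lemma cut_weight_interval_eq_right:
  assumes "arc_matrix n m1" "noncrossing m1" "arc_matrix n m2" "noncrossing m2"
    and ab: "p < a" "a \<le> q" "q < b" "b \<le> n"
    and eq: "cut_weight n m1 {q+1..b} = cut_weight n m2 {q+1..b}"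
      "cut_weight n m1 {a..q} = cut_weight n m2 {a..q}"
      "cut_weight n m1 {p..a-1} = cut_weight n m2 {p..a-1}"
      "cut_weight n m1 {p..q} = cut_weight n m2 {p..q}"
      "cut_weight n m1 {p..b} = cut_weight n m2 {p..b}"
  shows "cut_weight n m1 {a..b} = cut_weight n m2 {a..b}"
proof -
  have sets: "{q+1..b} \<union> {a..q} = {a..b}" "{a..q} \<union> {p..a-1} = {p..q}"
    "{q+1..b} \<union> {a..q} \<union> {p..a-1} = {p..b}" using ab by auto
  have cross: "chords_cross x y u w"
    if "x \<in> {q+1..b}" "y \<in> {p..a-1}" "u \<in> {a..q}" "w \<in> {..n} - ({q+1..b} \<union> {a..q} \<union> {p..a-1})"
    for x y u w
  proof (subst chords_cross_swap, rule chords_cross_outside)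
    show "y < u" "u < x" using that(1-3) ab by auto
    have "w \<notin> {p..b}" using that(4) unfolding sets(3) by blast
    then show "w < y \<or> x < w" using that(1,2) by auto
  qed
  have disj: "{q+1..b} \<inter> {a..q} = {}" "{q+1..b} \<inter> {p..a-1} = {}" "{a..q} \<inter> {p..a-1} = {}"
    using ab by auto
  have sub: "{q+1..b} \<union> {a..q} \<union> {p..a-1} \<subseteq> {..n}" using ab unfolding sets(3) by auto
  show ?thesis
    using cut_weight_Un_eq_if_overlap[OF assms(1-4) disj sub cross eq(1,2,3)
        eq(4)[folded sets(2)] eq(5)[folded sets(3)]]
    unfolding sets(1) .
qed

lemma cut_weight_interval_entry:
  assumes sym: "sym_matrix m" and ij: "i < j" "j \<le> n"
  shows "2 * m i j + cut_weight n m {i..j} + cut_weight n m {i+1..j-1}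
       = cut_weight n m {i..j-1} + cut_weight n m {i+1..j}"
proof -
  let ?O = "{i+1..j-1}"
  have sets: "?O \<union> {j} = {i+1..j}" "{i..j-1} \<union> {j} = {i..j}" "{i..j-1} = {i} \<union> ?O"
    using ij by auto
  have "cut_weight n m (?O \<union> {j}) + 2 * arcs_between m ?O {j}
      = cut_weight n m ?O + cut_weight n m {j}"
    by (rule cut_weight_Un[OF sym]) (use ij in auto)
  moreover have "cut_weight n m ({i..j-1} \<union> {j}) + 2 * arcs_between m {i..j-1} {j}
      = cut_weight n m {i..j-1} + cut_weight n m {j}"
    by (rule cut_weight_Un[OF sym]) (use ij in auto)
  moreover have "arcs_between m {i..j-1} {j} = m i j + arcs_between m ?O {j}"
    unfolding sets(3) by (subst arcs_between_Un_left) (auto simp: arcs_between_def)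
  ultimately show ?thesis unfolding sets(1,2) by linarith
qed

lemma arc_matrix_eqI:
  assumes m1: "arc_matrix n m1" and m2: "arc_matrix n m2"
    and eq: "\<And>i j. i < j \<Longrightarrow> j \<le> n \<Longrightarrow> m1 i j = m2 i j"
  shows "m1 = m2"
proof (intro ext)
  fix i j
  consider "n < i \<or> n < j" | "i = j" | "i < j" "j \<le> n" | "j < i" "i \<le> n" by linarith
  then show "m1 i j = m2 i j"
  proof cases
    case 3 then show ?thesis by (rule eq)
  next
    case 4 then show ?thesis
      using eq sym_matrixD[OF arc_matrix_sym[OF m1]] sym_matrixD[OF arc_matrix_sym[OF m2]] by metis
  qed (use m1 m2 in \<open>auto simp: arc_matrix_def\<close>)
qed

text \<open>The entries at position \<open>0\<close>, which no interval \<open>[a, b]\<close> with \<open>1 \<le> a\<close> reaches, are recovered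
  from the singleton cuts.\<close>
lemma arc_matrix_eq_if_interval_cuts_eq:
  assumes m1: "arc_matrix n m1" and m2: "arc_matrix n m2"
    and eq: "\<And>a b. 1 \<le> a \<Longrightarrow> a \<le> b \<Longrightarrow> b \<le> n \<Longrightarrow> cut_weight n m1 {a..b} = cut_weight n m2 {a..b}"
  shows "m1 = m2"
proof -
  have eq': "cut_weight n m1 {a..b} = cut_weight n m2 {a..b}" if "1 \<le> a" "b \<le> n" for a b
    using eq[OF that(1) _ that(2)] by (cases "a \<le> b") (auto simp: cut_weight_def arcs_between_def)
  have pos: "m1 i j = m2 i j" if "1 \<le> i" "i < j" "j \<le> n" for i j
    using cut_weight_interval_entry[OF arc_matrix_sym[OF m1] that(2,3)]
      cut_weight_interval_entry[OF arc_matrix_sym[OF m2] that(2,3)]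
      eq'[of i j] eq'[of "i+1" "j-1"] eq'[of i "j-1"] eq'[of "i+1" j] that
    by simp
  have zero: "m1 0 j = m2 0 j" if "1 \<le> j" "j \<le> n" for j
  proof -
    have diag: "m1 j j = 0" "m2 j j = 0" using m1 m2 unfolding arc_matrix_def by auto
    have split: "{..n} = insert 0 ({1..n} - {j}) \<union> {j}" using that by auto
    have rest: "(\<Sum>k\<in>{1..n} - {j}. m1 j k) = (\<Sum>k\<in>{1..n} - {j}. m2 j k)"
    proof (rule sum.cong)
      fix k assume "k \<in> {1..n} - {j}"
      then show "m1 j k = m2 j k"
        using pos that sym_matrixD[OF arc_matrix_sym[OF m1]] sym_matrixD[OF arc_matrix_sym[OF m2]]
        by (metis Diff_iff atLeastAtMost_iff insert_iff linorder_neqE_nat)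
    qed simp
    have "(\<Sum>k\<le>n. m1 j k) = (\<Sum>k\<le>n. m2 j k)"
      using cut_weight_singleton[of m1, OF diag(1) that(2)] cut_weight_singleton[of m2, OF diag(2) that(2)]
        eq'[of j j] that by simp
    then have "m1 j 0 = m2 j 0" unfolding split using diag rest that by simp
    then show ?thesis
      using sym_matrixD[OF arc_matrix_sym[OF m1]] sym_matrixD[OF arc_matrix_sym[OF m2]] by metis
  qed
  show ?thesis
  proof (rule arc_matrix_eqI[OF m1 m2])
    fix i j :: nat assume "i < j" "j \<le> n"
    then show "m1 i j = m2 i j" using pos zero by (cases "i = 0") auto
  qed
qed

text \<open>On the cuts of the intervals compatible with the block \<open>[p, q]\<close> the shear acts by relabelling.\<close>
definition compatible :: "nat \<Rightarrow> nat \<Rightarrow> nat \<Rightarrow> nat \<Rightarrow> bool" where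
  "compatible p q a b \<longleftrightarrow> b < p \<or> q < a \<or> (p \<le> a \<and> b \<le> q) \<or> (a \<le> p \<and> q \<le> b)"

lemma compatible_nested: "p \<le> a \<Longrightarrow> b \<le> q \<Longrightarrow> compatible p q a b"
  unfolding compatible_def by simp

text \<open>The intervals in \<open>closed\<close> are the compatible pieces of an interval straddling the block.\<close>
lemma cut_weight_eq_if_compatible_eq:
  assumes m: "arc_matrix n m1" "noncrossing m1" "arc_matrix n m2" "noncrossing m2"
    and pq: "1 \<le> p" "p \<le> q" "q \<le> n"
    and eq: "\<And>a b. 1 \<le> a \<Longrightarrow> a \<le> b \<Longrightarrow> b \<le> n \<Longrightarrow> compatible p q a b \<Longrightarrow> G a b \<Longrightarrow>
      cut_weight n m1 {a..b} = cut_weight n m2 {a..b}"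
    and closed: "\<And>a b. 1 \<le> a \<Longrightarrow> a \<le> b \<Longrightarrow> b \<le> n \<Longrightarrow> G a b \<Longrightarrow> \<not> compatible p q a b \<Longrightarrow>
       (a < p \<longrightarrow> G a (p-1) \<and> G p b \<and> G (b+1) q \<and> G p q \<and> G a q) \<and>
       (p < a \<longrightarrow> G (q+1) b \<and> G a q \<and> G p (a-1) \<and> G p q \<and> G p b)"
    and ab: "1 \<le> a" "a \<le> b" "b \<le> n" "G a b"
  shows "cut_weight n m1 {a..b} = cut_weight n m2 {a..b}"
proof (cases "compatible p q a b")
  case True then show ?thesis using eq ab by blast
next
  case False
  note G = closed[OF ab False]
  consider "a < p" "p \<le> b" "b < q" | "p < a" "a \<le> q" "q < b"
    using False ab(2) unfolding compatible_def by linarith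
  then show ?thesis
  proof cases
    case 1
    show ?thesis
      by (rule cut_weight_interval_eq_left[OF m 1 pq(3)];
          rule eq; use ab pq 1 G in \<open>auto simp: compatible_def\<close>)
  next
    case 2
    show ?thesis
      by (rule cut_weight_interval_eq_right[OF m 2 ab(3)];
          rule eq; use ab pq 2 G in \<open>auto simp: compatible_def\<close>)
  qed
qed

section \<open>The shear on arc matrices\<close>

lemma refl_pos_inside: "k \<in> {p..q} \<Longrightarrow> refl_pos p q k = p + q - k"
  unfolding refl_pos_def by simp

lemma refl_pos_outside: "k \<notin> {p..q} \<Longrightarrow> refl_pos p q k = k"
  unfolding refl_pos_def by auto

lemma refl_pos_refl_pos [simp]: "refl_pos p q (refl_pos p q k) = k"
  unfolding refl_pos_def by auto

lemma inj_refl_pos: "inj (refl_pos p q)"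
  by (metis injI refl_pos_refl_pos)

lemma refl_pos_commute:
  "q < p' \<Longrightarrow> refl_pos p q (refl_pos p' q' k) = refl_pos p' q' (refl_pos p q k)"
  unfolding refl_pos_def by auto

lemma refl_pos_conjugate:
  "p \<le> p' \<Longrightarrow> p' < q' \<Longrightarrow> q' \<le> q \<Longrightarrow>
   refl_pos p q (refl_pos p' q' (refl_pos p q k)) = refl_pos (p + q - q') (p + q - p') k"
  unfolding refl_pos_def by auto

lemma refl_pos_image_interval:
  assumes "p \<le> a" "a \<le> b" "b \<le> q"
  shows "refl_pos p q ` {a..b} = {p + q - b..p + q - a}"
proof (intro equalityI subsetI)
  fix x assume "x \<in> refl_pos p q ` {a..b}"
  then show "x \<in> {p + q - b..p + q - a}" using assms unfolding refl_pos_def by auto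
next
  fix x assume x: "x \<in> {p + q - b..p + q - a}"
  then have "p + q - x \<in> {a..b}" using assms by auto
  moreover have "refl_pos p q (p + q - x) = x" using x assms unfolding refl_pos_def by auto
  ultimately show "x \<in> refl_pos p q ` {a..b}" by (metis imageI)
qed

lemma refl_pos_image_eq:
  assumes "\<And>k. k \<in> S \<Longrightarrow> refl_pos p q k \<in> S"
  shows "refl_pos p q ` S = S"
proof (intro equalityI subsetI)
  fix x assume "x \<in> S"
  then show "x \<in> refl_pos p q ` S"
    using assms rev_image_eqI[of "refl_pos p q x" S x "refl_pos p q"] by simp
qed (use assms in blast)

lemma refl_pos_image_diff:
  assumes "S \<subseteq> {p..q}"
  shows "refl_pos p q ` ({p..q} - S) = {p..q} - refl_pos p q ` S"
proof -
  have "refl_pos p q ` {p..q} = {p..q}" by (rule refl_pos_image_eq) (auto simp: refl_pos_def)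
  then show ?thesis using image_set_diff[OF inj_refl_pos] by metis
qed

lemma bij_betw_refl_pos:
  assumes "1 \<le> p" "q \<le> n"
  shows "bij_betw (refl_pos p q) {1..n} {1..n}"
proof -
  have "refl_pos p q ` {1..n} = {1..n}"
  proof (rule refl_pos_image_eq)
    fix k assume "k \<in> {1..n}"
    then show "refl_pos p q k \<in> {1..n}"
      using assms by (cases "k \<in> {p..q}") (simp_all add: refl_pos_inside refl_pos_outside, arith)
  qed
  then show ?thesis unfolding bij_betw_def using inj_on_subset[OF inj_refl_pos subset_UNIV] by simp
qed

lemma length_filter_concat_map:
  "length (filter P (concat (map f xs))) = (\<Sum>x\<leftarrow>xs. length (filter P (f x)))"
  by (induction xs) auto

lemma sum_list_indicator:
  "distinct xs \<Longrightarrow> (\<Sum>x\<leftarrow>xs. if x = a then (c::nat) else 0) = (if a \<in> set xs then c else 0)"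
  by (induction xs) auto

lemma sum_length_filter_pair_fst:
  "finite R \<Longrightarrow> fst ` set xs \<subseteq> R \<Longrightarrow>
   (\<Sum>r\<in>R. length (filter (\<lambda>e. e = (r, i)) xs)) = length (filter (\<lambda>e. snd e = i) xs)"
proof (induction xs)
  case (Cons x xs)
  have "(\<Sum>r\<in>R. length (filter (\<lambda>e. e = (r, i)) (x # xs))) =
      (\<Sum>r\<in>R. if r = fst x then (if snd x = i then 1 else 0) else 0) +
      (\<Sum>r\<in>R. length (filter (\<lambda>e. e = (r, i)) xs))"
    by (subst sum.distrib[symmetric], rule sum.cong) (auto simp: prod_eq_iff)
  also have "(\<Sum>r\<in>R. if r = fst x then (if snd x = i then 1 else 0) else 0) = (if snd x = i then 1 else 0)"
    using Cons.prems by (simp add: sum.delta')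
  finally show ?case using Cons by simp
qed simp

lemma sum_length_filter_pair_snd:
  "finite I \<Longrightarrow> snd ` set xs \<subseteq> I \<Longrightarrow>
   (\<Sum>i\<in>I. length (filter (\<lambda>e. e = (r, i)) xs)) = length (filter (\<lambda>e. fst e = r) xs)"
proof (induction xs)
  case (Cons x xs)
  have "(\<Sum>i\<in>I. length (filter (\<lambda>e. e = (r, i)) (x # xs))) =
      (\<Sum>i\<in>I. if i = snd x then (if fst x = r then 1 else 0) else 0) +
      (\<Sum>i\<in>I. length (filter (\<lambda>e. e = (r, i)) xs))"
    by (subst sum.distrib[symmetric], rule sum.cong) (auto simp: prod_eq_iff)
  also have "(\<Sum>i\<in>I. if i = snd x then (if fst x = r then 1 else 0) else 0) = (if fst x = r then 1 else 0)"
    using Cons.prems by (simp add: sum.delta')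
  finally show ?case using Cons by simp
qed simp

definition crossing_count :: "nat \<Rightarrow> nat \<Rightarrow> nat \<Rightarrow> (nat \<Rightarrow> nat \<Rightarrow> nat) \<Rightarrow> nat \<Rightarrow> nat \<Rightarrow> nat" where
  "crossing_count n p q m r i = length (filter (\<lambda>e. e = (r, i)) (new_crossing n p q m))"

definition shear_matrix :: "nat \<Rightarrow> nat \<Rightarrow> nat \<Rightarrow> (nat \<Rightarrow> nat \<Rightarrow> nat) \<Rightarrow> nat \<Rightarrow> nat \<Rightarrow> nat" where
  "shear_matrix n p q m i j =
     (if (p \<le> i \<and> i \<le> q) = (p \<le> j \<and> j \<le> q) then m (refl_pos p q i) (refl_pos p q j)
      else if p \<le> i \<and> i \<le> q then crossing_count n p q m j i else crossing_count n p q m i j)"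

lemma shear_Pair: "shear n (p, q) (\<sigma>, m) = (\<sigma> \<circ> refl_pos p q, shear_matrix n p q m)"
  unfolding shear_def shear_matrix_def crossing_count_def Let_def o_def by simp

locale shear_block =
  fixes n p q :: nat
  assumes p_pos: "1 \<le> p" and p_le_q: "p \<le> q" and q_le_n: "q \<le> n"
begin

abbreviation "outer \<equiv> outer_order n p q"
abbreviation "crossings m \<equiv> crossing_list n p q m"
abbreviation "new_crossings m \<equiv> new_crossing n p q m"

lemma set_outer: "set outer = {..n} - {p..q}"
  unfolding outer_order_def using p_pos p_le_q q_le_n by auto

lemma distinct_outer: "distinct outer"
  unfolding outer_order_def using p_le_q by auto

lemma set_crossings:
  "set (crossings m) = {(i, r). i \<in> {p..q} \<and> r \<in> {..n} - {p..q} \<and> 0 < m i r}"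
  unfolding crossing_list_def set_outer[symmetric] by (auto split: if_splits)

lemma count_crossings_inner:
  "length (filter (\<lambda>e. fst e = i) (crossings m)) =
   (if i \<in> {p..q} then \<Sum>r\<in>{..n} - {p..q}. m i r else 0)"
proof -
  have "length (filter (\<lambda>e. fst e = i) (crossings m)) =
     (\<Sum>i'\<leftarrow>[p..<q+1]. if i' = i then (\<Sum>r\<leftarrow>outer. m i r) else 0)"
    unfolding crossing_list_def length_filter_concat_map
    by (auto intro!: arg_cong[where f=sum_list])
  also have "\<dots> = (if i \<in> {p..q} then (\<Sum>r\<leftarrow>outer. m i r) else 0)"
    by (subst sum_list_indicator) auto
  also have "(\<Sum>r\<leftarrow>outer. m i r) = (\<Sum>r\<in>{..n} - {p..q}. m i r)"
    using sum_list_distinct_conv_sum_set[OF distinct_outer] set_outer by simp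
  finally show ?thesis .
qed

lemma count_crossings_outer:
  "length (filter (\<lambda>e. snd e = r) (crossings m)) =
   (if r \<in> {..n} - {p..q} then \<Sum>i\<in>{p..q}. m i r else 0)"
proof -
  have "length (filter (\<lambda>e. snd e = r) (crossings m)) =
     (\<Sum>i\<leftarrow>[p..<q+1]. \<Sum>r'\<leftarrow>outer. if r' = r then m i r else 0)"
    unfolding crossing_list_def length_filter_concat_map
    by (intro arg_cong[where f=sum_list] map_cong refl) (auto simp: filter_replicate)
  also have "\<dots> = (\<Sum>i\<leftarrow>[p..<q+1]. if r \<in> set outer then m i r else 0)"
    using sum_list_indicator[OF distinct_outer] by simp
  also have "\<dots> = (if r \<in> set outer then \<Sum>i\<in>{p..q}. m i r else 0)"
  proof -
    have "(\<Sum>i\<leftarrow>[p..<q+1]. m i r) = (\<Sum>i\<in>{p..<q+1}. m i r)"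
      by (metis distinct_upt set_upt sum_list_distinct_conv_sum_set)
    also have "{p..<q+1} = {p..q}" by auto
    finally show ?thesis by simp
  qed
  finally show ?thesis using set_outer by simp
qed

lemma new_crossing_eq:
  "new_crossings m = zip (map snd (crossings m)) (map (\<lambda>e. p + q - fst e) (rev (crossings m)))"
  unfolding new_crossing_def Let_def by (simp add: case_prod_beta')

lemma length_new_crossing: "length (new_crossings m) = length (crossings m)"
  unfolding new_crossing_eq by simp

lemma map_fst_new_crossing: "map fst (new_crossings m) = map snd (crossings m)"
  unfolding new_crossing_eq by simp

lemma map_snd_new_crossing:
  "map snd (new_crossings m) = map (\<lambda>e. p + q - fst e) (rev (crossings m))"
  unfolding new_crossing_eq by simp

lemma nth_new_crossing:
  "k < length (crossings m) \<Longrightarrow> new_crossings m ! k =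
     (snd (crossings m ! k), p + q - fst (crossings m ! (length (crossings m) - Suc k)))"
  unfolding new_crossing_eq by (simp add: rev_nth)

text \<open>Each crossing point pairs the outer end \<open>r\<close> of an old arc leaving the block at some
  \<open>i\<^sub>0\<close> with the reflection \<open>i\<close> of the inner end of another old arc, leaving towards
  some \<open>r\<^sub>0\<close>.\<close>
lemma new_crossing_witnesses:
  assumes "(r, i) \<in> set (new_crossings m)"
  obtains i0 r0 where "r \<in> {..n} - {p..q}" "i \<in> {p..q}" "i0 \<in> {p..q}" "0 < m i0 r"
    "r0 \<in> {..n} - {p..q}" "0 < m (p + q - i) r0"
proof -
  have "r \<in> set (map snd (crossings m))" "i \<in> set (map (\<lambda>e. p + q - fst e) (rev (crossings m)))"
    using assms set_zip_leftD set_zip_rightD unfolding new_crossing_eq by fast+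
  then obtain i0 i1 r0 where c: "(i0, r) \<in> set (crossings m)" "(i1, r0) \<in> set (crossings m)"
    "i = p + q - i1" by auto
  then have w: "r \<in> {..n} - {p..q}" "i0 \<in> {p..q}" "0 < m i0 r" "i1 \<in> {p..q}"
    "r0 \<in> {..n} - {p..q}" "0 < m i1 r0"
    unfolding set_crossings by auto
  moreover have "i \<in> {p..q}" "p + q - i = i1" using w(4) c(3) by auto
  ultimately show thesis by (intro that[of i0 r0]) simp_all
qed

lemma new_crossing_mem:
  assumes "(r, i) \<in> set (new_crossings m)"
  shows "r \<in> {..n} - {p..q}" "i \<in> {p..q}"
  by (rule new_crossing_witnesses[OF assms], assumption)+

lemma crossing_count_pos: "crossing_count n p q m r i \<noteq> 0 \<Longrightarrow> (r, i) \<in> set (new_crossings m)"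
  unfolding crossing_count_def by (auto simp: filter_empty_conv)

lemma sum_crossing_count_inner:
  assumes i: "i \<in> {p..q}"
  shows "(\<Sum>r\<in>{..n} - {p..q}. crossing_count n p q m r i) = (\<Sum>r\<in>{..n} - {p..q}. m (p + q - i) r)"
proof -
  have "fst ` set (new_crossings m) \<subseteq> {..n} - {p..q}"
    using new_crossing_mem(1) by fastforce
  then have "(\<Sum>r\<in>{..n} - {p..q}. crossing_count n p q m r i)
      = length (filter (\<lambda>e. snd e = i) (new_crossings m))"
    unfolding crossing_count_def by (intro sum_length_filter_pair_fst) auto
  also have "\<dots> = length (filter (\<lambda>z. z = i) (map snd (new_crossings m)))"
    by (simp add: filter_map o_def)
  also have "\<dots> = length (filter (\<lambda>e. p + q - fst e = i) (crossings m))"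
    unfolding map_snd_new_crossing by (simp add: filter_map o_def rev_filter[symmetric])
  also have "filter (\<lambda>e. p + q - fst e = i) (crossings m) = filter (\<lambda>e. fst e = p + q - i) (crossings m)"
    by (rule filter_cong) (use i in \<open>auto simp: set_crossings\<close>)
  also have "length \<dots> = (\<Sum>r\<in>{..n} - {p..q}. m (p + q - i) r)"
  proof -
    have "p + q - i \<in> {p..q}" using i by auto
    then show ?thesis unfolding count_crossings_inner by simp
  qed
  finally show ?thesis .
qed

lemma sum_crossing_count_outer:
  assumes r: "r \<in> {..n} - {p..q}"
  shows "(\<Sum>i\<in>{p..q}. crossing_count n p q m r i) = (\<Sum>i\<in>{p..q}. m i r)"
proof -
  have "snd ` set (new_crossings m) \<subseteq> {p..q}"
    using new_crossing_mem(2) by fastforce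
  then have "(\<Sum>i\<in>{p..q}. crossing_count n p q m r i)
      = length (filter (\<lambda>e. fst e = r) (new_crossings m))"
    unfolding crossing_count_def by (intro sum_length_filter_pair_snd) auto
  also have "\<dots> = length (filter (\<lambda>z. z = r) (map fst (new_crossings m)))"
    by (simp add: filter_map o_def)
  also have "\<dots> = length (filter (\<lambda>e. snd e = r) (crossings m))"
    unfolding map_fst_new_crossing by (simp add: filter_map o_def)
  also have "\<dots> = (\<Sum>i\<in>{p..q}. m i r)"
    using r by (simp add: count_crossings_outer)
  finally show ?thesis .
qed

end

context shear_block
begin

lemma shear_matrix_inside:
  "i \<in> {p..q} \<Longrightarrow> j \<in> {p..q} \<Longrightarrow> shear_matrix n p q m i j = m (p + q - i) (p + q - j)"
  unfolding shear_matrix_def refl_pos_def by simp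

lemma shear_matrix_outside:
  "i \<notin> {p..q} \<Longrightarrow> j \<notin> {p..q} \<Longrightarrow> shear_matrix n p q m i j = m i j"
  unfolding shear_matrix_def refl_pos_def by auto

lemma shear_matrix_across:
  "i \<in> {p..q} \<Longrightarrow> r \<notin> {p..q} \<Longrightarrow> shear_matrix n p q m i r = crossing_count n p q m r i"
  "i \<in> {p..q} \<Longrightarrow> r \<notin> {p..q} \<Longrightarrow> shear_matrix n p q m r i = crossing_count n p q m r i"
  unfolding shear_matrix_def by auto

lemma sym_shear_matrix: "sym_matrix m \<Longrightarrow> sym_matrix (shear_matrix n p q m)"
  unfolding sym_matrix_def shear_matrix_def by auto

lemma cut_weight_shear_inside:
  assumes S: "S \<subseteq> {p..q}"
  shows "cut_weight n (shear_matrix n p q m) S = cut_weight n m (refl_pos p q ` S)"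
proof -
  let ?r = "refl_pos p q" and ?U = "{..n}" and ?K = "{p..q}"
  have inj: "inj_on ?r A" for A using inj_on_subset[OF inj_refl_pos subset_UNIV] .
  have row: "(\<Sum>y\<in>?U - S. shear_matrix n p q m x y) = (\<Sum>y\<in>?U - ?r ` S. m (?r x) y)"
    if x: "x \<in> S" for x
  proof -
    have xK: "x \<in> ?K" using x S by auto
    have "?r ` S \<subseteq> ?K" using S by (auto simp: refl_pos_def)
    then have split: "?U - S = (?K - S) \<union> (?U - ?K)" "?U - ?r ` S = (?K - ?r ` S) \<union> (?U - ?K)"
      using S q_le_n by auto
    have "(\<Sum>y\<in>?K - S. shear_matrix n p q m x y) = (\<Sum>y\<in>?K - S. m (?r x) (?r y))"
      by (rule sum.cong) (use xK in \<open>auto simp: shear_matrix_def\<close>)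
    also have "\<dots> = (\<Sum>y\<in>?K - ?r ` S. m (?r x) y)"
      using sum.reindex[OF inj, of "m (?r x)" "?K - S"] refl_pos_image_diff[OF S] by simp
    finally have inner: "(\<Sum>y\<in>?K - S. shear_matrix n p q m x y) = (\<Sum>y\<in>?K - ?r ` S. m (?r x) y)" .
    have "(\<Sum>y\<in>?U - ?K. shear_matrix n p q m x y) = (\<Sum>y\<in>?U - ?K. crossing_count n p q m y x)"
      by (rule sum.cong) (use xK in \<open>auto simp: shear_matrix_across\<close>)
    also have "\<dots> = (\<Sum>y\<in>?U - ?K. m (?r x) y)"
      using sum_crossing_count_inner[OF xK] refl_pos_inside[OF xK] by simp
    finally show ?thesis
      unfolding split using inner by (subst (1 2) sum.union_disjoint) auto
  qed
  have "cut_weight n (shear_matrix n p q m) S = (\<Sum>x\<in>S. \<Sum>y\<in>?U - ?r ` S. m (?r x) y)"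
    unfolding cut_weight_def arcs_between_def using row by simp
  also have "\<dots> = cut_weight n m (?r ` S)"
    unfolding cut_weight_def arcs_between_def
    using sum.reindex[OF inj, of "\<lambda>x. \<Sum>y\<in>?U - ?r ` S. m x y" S] by simp
  finally show ?thesis .
qed

lemma cut_weight_shear_disjoint:
  assumes sym: "sym_matrix m" and S: "S \<subseteq> {..n}" "S \<inter> {p..q} = {}"
  shows "cut_weight n (shear_matrix n p q m) S = cut_weight n m S"
proof -
  let ?K = "{p..q}"
  have row: "(\<Sum>y\<in>{..n} - S. shear_matrix n p q m x y) = (\<Sum>y\<in>{..n} - S. m x y)"
    if x: "x \<in> S" for x
  proof -
    have xO: "x \<in> {..n} - ?K" using x S by auto
    define T where "T = {..n} - S - ?K"
    have split: "{..n} - S = T \<union> ?K" "finite T" "T \<inter> ?K = {}"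
      using S q_le_n unfolding T_def by auto
    have "(\<Sum>y\<in>T. shear_matrix n p q m x y) = (\<Sum>y\<in>T. m x y)"
      by (rule sum.cong) (use xO in \<open>auto simp: shear_matrix_outside T_def\<close>)
    moreover have "(\<Sum>y\<in>?K. shear_matrix n p q m x y) = (\<Sum>y\<in>?K. m x y)"
    proof -
      have "(\<Sum>y\<in>?K. shear_matrix n p q m x y) = (\<Sum>y\<in>?K. crossing_count n p q m x y)"
        by (rule sum.cong) (use xO in \<open>auto simp: shear_matrix_across\<close>)
      also have "\<dots> = (\<Sum>y\<in>?K. m y x)" by (rule sum_crossing_count_outer[OF xO])
      finally show ?thesis using sym_matrixD[OF sym, of x] by simp
    qed
    ultimately show ?thesis unfolding split(1) using split(2,3) by (simp add: sum.union_disjoint)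
  qed
  then show ?thesis unfolding cut_weight_def arcs_between_def by simp
qed

lemma cut_weight_shear_superset:
  assumes sym: "sym_matrix m" and S: "S \<subseteq> {..n}" "{p..q} \<subseteq> S"
  shows "cut_weight n (shear_matrix n p q m) S = cut_weight n m S"
proof -
  have "cut_weight n (shear_matrix n p q m) ({..n} - S) = cut_weight n m ({..n} - S)"
    by (rule cut_weight_shear_disjoint[OF sym]) (use S in auto)
  then show ?thesis
    using cut_weight_complement[OF sym S(1)] cut_weight_complement[OF sym_shear_matrix[OF sym] S(1)]
    by simp
qed

lemma cut_weight_shear_nested:
  assumes "p \<le> a" "a \<le> b" "b \<le> q"
  shows "cut_weight n (shear_matrix n p q m) {a..b} = cut_weight n m {p+q-b..p+q-a}"
  using cut_weight_shear_inside[of "{a..b}" m] refl_pos_image_interval[OF assms] assms by auto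

lemma cut_weight_shear_unnested:
  assumes sym: "sym_matrix m" and ab: "a \<le> b" "b \<le> n"
    and comp: "compatible p q a b" and not_nested: "\<not> (p \<le> a \<and> b \<le> q)"
  shows "cut_weight n (shear_matrix n p q m) {a..b} = cut_weight n m {a..b}"
proof -
  consider "b < p \<or> q < a" | "a \<le> p" "q \<le> b" using comp not_nested unfolding compatible_def by auto
  then show ?thesis
  proof cases
    case 1 then show ?thesis using cut_weight_shear_disjoint[OF sym, of "{a..b}"] ab by auto
  next
    case 2 then show ?thesis using cut_weight_shear_superset[OF sym, of "{a..b}"] ab by auto
  qed
qed

end

section \<open>The sheared arcs do not cross\<close>

lemma sorted_concat_map:
  "(\<And>x. x \<in> set xs \<Longrightarrow> sorted (f x)) \<Longrightarrow>
   sorted_wrt (\<lambda>x y. \<forall>a\<in>set (f x). \<forall>b\<in>set (f y). a \<le> b) xs \<Longrightarrow> sorted (concat (map f xs))"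
  by (induction xs) (auto simp: sorted_append)

context shear_block
begin

text \<open>The index of an outer position in \<open>outer\<close>.\<close>
definition outer_rank :: "nat \<Rightarrow> nat" where
  "outer_rank r = (if r < p then p - 1 - r else p + n - r)"

lemma sorted_wrt_outer: "sorted_wrt (\<lambda>r r'. outer_rank r < outer_rank r') outer"
  unfolding outer_order_def sorted_wrt_append sorted_wrt_rev
proof (intro conjI)
  show "sorted_wrt (\<lambda>x y. outer_rank y < outer_rank x) [0..<p]"
    by (rule sorted_wrt_mono_rel[OF _ sorted_wrt_upt]) (auto simp: outer_rank_def)
  show "sorted_wrt (\<lambda>x y. outer_rank y < outer_rank x) [q + 1..<n + 1]"
    by (rule sorted_wrt_mono_rel[OF _ sorted_wrt_upt]) (use p_le_q in \<open>auto simp: outer_rank_def\<close>)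
  show "\<forall>x\<in>set (rev [0..<p]). \<forall>y\<in>set (rev [q + 1..<n + 1]). outer_rank x < outer_rank y"
    using p_le_q by (auto simp: outer_rank_def)
qed

lemma chords_cross_iff_outer_rank:
  assumes "i1 \<in> {p..q}" "i2 \<in> {p..q}" "i1 < i2" "r1 \<in> {..n} - {p..q}" "r2 \<in> {..n} - {p..q}"
  shows "chords_cross i1 r1 i2 r2 \<longleftrightarrow> outer_rank r2 < outer_rank r1"
  using assms unfolding chords_cross_def strictly_between_def outer_rank_def by auto

lemma outer_rank_mono:
  assumes sym: "sym_matrix m" and nc: "noncrossing m"
    and i: "i1 \<in> {p..q}" "i2 \<in> {p..q}" "i1 < i2" and r: "r1 \<in> {..n} - {p..q}" "r2 \<in> {..n} - {p..q}"
    and m: "m i1 r1 \<noteq> 0" "m i2 r2 \<noteq> 0"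
  shows "outer_rank r1 \<le> outer_rank r2"
  using noncrossing_not_chords_cross[OF sym nc m] chords_cross_iff_outer_rank[OF i r] by simp

lemma sorted_fst_crossings: "sorted (map fst (crossings m))"
proof -
  have "map fst (crossings m) = concat (map (\<lambda>i. concat (map (\<lambda>r. replicate (m i r) i) outer)) [p..<q+1])"
    unfolding crossing_list_def by (simp add: map_concat o_def)
  also have "sorted \<dots>"
  proof (rule sorted_concat_map)
    fix i show "sorted (concat (map (\<lambda>r. replicate (m i r) i) outer))"
      by (rule sorted_concat_map) (auto intro: sorted_wrt_mono_rel[OF _ sorted_wrt_outer])
  qed (rule sorted_wrt_mono_rel[OF _ sorted_wrt_upt], auto)
  finally show ?thesis .
qed

lemma sorted_outer_rank_crossings:
  assumes sym: "sym_matrix m" and nc: "noncrossing m"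
  shows "sorted (map (outer_rank \<circ> snd) (crossings m))"
proof -
  have "map (outer_rank \<circ> snd) (crossings m) =
      concat (map (\<lambda>i. concat (map (\<lambda>r. replicate (m i r) (outer_rank r)) outer)) [p..<q+1])"
    unfolding crossing_list_def by (simp add: map_concat o_def)
  also have "sorted \<dots>"
  proof (rule sorted_concat_map)
    fix i show "sorted (concat (map (\<lambda>r. replicate (m i r) (outer_rank r)) outer))"
      by (rule sorted_concat_map) (auto intro: sorted_wrt_mono_rel[OF _ sorted_wrt_outer])
  next
    show "sorted_wrt (\<lambda>i i'. \<forall>a\<in>set (concat (map (\<lambda>r. replicate (m i r) (outer_rank r)) outer)).
            \<forall>b\<in>set (concat (map (\<lambda>r. replicate (m i' r) (outer_rank r)) outer)). a \<le> b) [p..<q+1]"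
    proof (rule sorted_wrt_mono_rel[OF _ sorted_wrt_upt], intro ballI)
      fix i i' a b
      assume i: "i \<in> set [p..<q+1]" "i' \<in> set [p..<q+1]" "i < i'"
        and a: "a \<in> set (concat (map (\<lambda>r. replicate (m i r) (outer_rank r)) outer))"
        and b: "b \<in> set (concat (map (\<lambda>r. replicate (m i' r) (outer_rank r)) outer))"
      from a obtain r where "r \<in> set outer" "m i r \<noteq> 0" "a = outer_rank r"
        by (auto split: if_splits)
      moreover from b obtain r' where "r' \<in> set outer" "m i' r' \<noteq> 0" "b = outer_rank r'"
        by (auto split: if_splits)
      moreover have "i \<in> {p..q}" "i' \<in> {p..q}" using i by auto
      ultimately show "a \<le> b" using outer_rank_mono[OF sym nc _ _ i(3)] set_outer by simp
    qed
  qed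
  finally show ?thesis .
qed

text \<open>Along the crossing list both the inner ends and (by noncrossingness) the ranks of the
  outer ends increase; pairing the list with its reverse and reflecting the inner ends
  preserves this.\<close>
lemma new_crossing_mono:
  assumes sym: "sym_matrix m" and nc: "noncrossing m"
    and e: "(r1, i1) \<in> set (new_crossings m)" "(r2, i2) \<in> set (new_crossings m)"
    and rank: "outer_rank r1 < outer_rank r2"
  shows "i1 \<le> i2"
proof -
  let ?K = "length (crossings m)"
  obtain k1 where k1: "k1 < ?K" "new_crossings m ! k1 = (r1, i1)"
    using e(1) length_new_crossing by (metis in_set_conv_nth)
  obtain k2 where k2: "k2 < ?K" "new_crossings m ! k2 = (r2, i2)"
    using e(2) length_new_crossing by (metis in_set_conv_nth)
  have x1: "r1 = snd (crossings m ! k1)" "i1 = p + q - fst (crossings m ! (?K - Suc k1))"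
    using nth_new_crossing[OF k1(1)] k1(2) by auto
  have x2: "r2 = snd (crossings m ! k2)" "i2 = p + q - fst (crossings m ! (?K - Suc k2))"
    using nth_new_crossing[OF k2(1)] k2(2) by auto
  have "k1 < k2"
  proof (rule ccontr)
    assume "\<not> k1 < k2"
    then have "outer_rank r2 \<le> outer_rank r1"
      using sorted_nth_mono[OF sorted_outer_rank_crossings[OF sym nc], of k2 k1] x1 x2 k1(1) by simp
    with rank show False by simp
  qed
  then have "fst (crossings m ! (?K - Suc k2)) \<le> fst (crossings m ! (?K - Suc k1))"
    using sorted_nth_mono[OF sorted_fst_crossings, of "?K - Suc k2" "?K - Suc k1"] k1(1) by simp
  then show ?thesis using x1 x2 by (simp add: diff_le_mono2)
qed

end

lemma chords_cross_move_end:
  assumes "x \<notin> {p..q}" "y \<notin> {p..q}" "i \<in> {p..q}" "j \<in> {p..q}" "chords_cross x y i r"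
  shows "chords_cross x y j r"
  using assms strictly_between_interval_cong[OF assms(1-4)] unfolding chords_cross_def by auto

lemma chords_cross_reflect_end:
  assumes x: "x \<in> {p..q}" "y \<in> {p..q}" "i \<in> {p..q}" and r: "r \<notin> {p..q}" "r0 \<notin> {p..q}"
    and cross: "chords_cross x y i r"
  shows "chords_cross (p + q - x) (p + q - y) (p + q - i) r0"
proof -
  have "\<not> strictly_between r x y" using not_strictly_between_interval x r(1) by blast
  then have "strictly_between i x y" "i \<noteq> x" "i \<noteq> y" using cross unfolding chords_cross_def by auto
  then have "strictly_between (p + q - i) (p + q - x) (p + q - y)"
    using strictly_between_reflect[of x "p + q" y i] x by auto
  moreover have "p + q - x \<in> {p..q}" "p + q - y \<in> {p..q}" using x by auto
  moreover have "\<not> strictly_between r0 (p + q - x) (p + q - y)"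
    using not_strictly_between_interval calculation(2,3) r(2) by blast
  ultimately show ?thesis using r(2) unfolding chords_cross_def strictly_between_def by auto
qed

lemma not_chords_cross_inside_outside:
  "x \<in> {p..q} \<Longrightarrow> y \<in> {p..q} \<Longrightarrow> u \<notin> {p..q} \<Longrightarrow> v \<notin> {p..q} \<Longrightarrow> \<not> chords_cross x y u v"
  using not_strictly_between_interval unfolding chords_cross_def by blast

context shear_block
begin

lemma shear_matrix_nonzero_cases:
  assumes "shear_matrix n p q m x y \<noteq> 0"
  obtains (inside) "x \<in> {p..q}" "y \<in> {p..q}" "m (p + q - x) (p + q - y) \<noteq> 0"
    | (outside) "x \<notin> {p..q}" "y \<notin> {p..q}" "m x y \<noteq> 0"
    | (across) "x \<in> {p..q}" "y \<notin> {p..q}" "(y, x) \<in> set (new_crossings m)"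
    | (across') "x \<notin> {p..q}" "y \<in> {p..q}" "(x, y) \<in> set (new_crossings m)"
  using assms shear_matrix_inside shear_matrix_outside shear_matrix_across crossing_count_pos
  by metis

lemma not_chords_cross_across_across:
  assumes sym: "sym_matrix m" and nc: "noncrossing m"
    and e: "(r1, i1) \<in> set (new_crossings m)" "(r2, i2) \<in> set (new_crossings m)"
  shows "\<not> chords_cross i1 r1 i2 r2"
proof
  have no_cross: False
    if "(r1, i1) \<in> set (new_crossings m)" "(r2, i2) \<in> set (new_crossings m)" "i1 < i2"
      "chords_cross i1 r1 i2 r2" for i1 r1 i2 r2
  proof -
    have "outer_rank r2 < outer_rank r1"
      using that chords_cross_iff_outer_rank new_crossing_mem by blast
    then show False using new_crossing_mono[OF sym nc that(2,1)] that(3) by simp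
  qed
  assume cross: "chords_cross i1 r1 i2 r2"
  then have "i1 \<noteq> i2" unfolding chords_cross_def by auto
  then show False
    using no_cross[OF e] no_cross[OF e(2,1)] cross chords_cross_commute by (metis linorder_neqE_nat)
qed

lemma not_chords_cross_across:
  assumes sym: "sym_matrix m" and nc: "noncrossing m"
    and e: "(r, i) \<in> set (new_crossings m)" and uv: "shear_matrix n p q m u v \<noteq> 0"
  shows "\<not> chords_cross i r u v"
proof
  assume cross: "chords_cross i r u v"
  obtain i0 r0 where ir: "r \<in> {..n} - {p..q}" "i \<in> {p..q}" and i0: "i0 \<in> {p..q}" "0 < m i0 r"
    and r0: "r0 \<in> {..n} - {p..q}" "0 < m (p + q - i) r0"
    using new_crossing_witnesses[OF e] by blast
  note no_cross = noncrossing_not_chords_cross[OF sym nc]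
  from uv show False
  proof (cases rule: shear_matrix_nonzero_cases)
    case inside
    have "chords_cross (p + q - u) (p + q - v) (p + q - i) r0"
      using chords_cross_reflect_end[OF inside(1,2) ir(2)] ir r0 cross chords_cross_commute by auto
    then show False using no_cross[OF inside(3)] r0(2) by simp
  next
    case outside
    have "chords_cross u v i0 r"
      using chords_cross_move_end[OF outside(1,2) ir(2) i0(1)] cross chords_cross_commute by blast
    then show False using no_cross[OF outside(3)] i0(2) by simp
  next
    case across
    then show False using not_chords_cross_across_across[OF sym nc e] cross by blast
  next
    case across'
    then show False using not_chords_cross_across_across[OF sym nc e] cross chords_cross_commute
      chords_cross_swap by metis
  qed
qed

lemma shear_matrix_not_chords_cross:
  assumes sym: "sym_matrix m" and nc: "noncrossing m"
    and xy: "shear_matrix n p q m x y \<noteq> 0" and uv: "shear_matrix n p q m u v \<noteq> 0"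
  shows "\<not> chords_cross x y u v"
proof -
  note no_cross = noncrossing_not_chords_cross[OF sym nc]
  have across_uv: "\<not> chords_cross x y u v"
    if "u \<in> {p..q} \<and> v \<notin> {p..q} \<or> u \<notin> {p..q} \<and> v \<in> {p..q}"
    using uv that
    by (cases rule: shear_matrix_nonzero_cases)
      (use not_chords_cross_across[OF sym nc _ xy] chords_cross_commute chords_cross_swap in metis)+
  from xy show ?thesis
  proof (cases rule: shear_matrix_nonzero_cases)
    case inside
    from uv show ?thesis
    proof (cases rule: shear_matrix_nonzero_cases)
      case inside': inside
      show ?thesis
        using chords_cross_reflect[of x "p + q" y u v] inside inside' no_cross by auto
    next
      case outside
      then show ?thesis using not_chords_cross_inside_outside inside by blast
    qed (use across_uv in blast)+
  next
    case outside
    from uv show ?thesis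
    proof (cases rule: shear_matrix_nonzero_cases)
      case inside
      then show ?thesis
        using not_chords_cross_inside_outside outside chords_cross_commute by blast
    next
      case outside': outside
      then show ?thesis using no_cross outside by blast
    qed (use across_uv in blast)+
  next
    case across
    then show ?thesis using not_chords_cross_across[OF sym nc _ uv] by blast
  next
    case across'
    then show ?thesis using not_chords_cross_across[OF sym nc _ uv] chords_cross_swap by blast
  qed
qed

lemma noncrossing_shear_matrix:
  assumes "sym_matrix m" "noncrossing m"
  shows "noncrossing (shear_matrix n p q m)"
  unfolding noncrossing_def
  using shear_matrix_not_chords_cross[OF assms] chords_crossI by blast

lemma arc_matrix_shear_matrix:
  assumes m: "arc_matrix n m"
  shows "arc_matrix n (shear_matrix n p q m)"
proof -
  have sym: "sym_matrix m" and diag: "\<forall>i. m i i = 0" and range: "\<forall>i j. n < i \<or> n < j \<longrightarrow> m i j = 0"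
    using m unfolding arc_matrix_def by auto
  have "shear_matrix n p q m i j = 0" if "n < i \<or> n < j" for i j
  proof (rule ccontr)
    assume "shear_matrix n p q m i j \<noteq> 0"
    then show False
    proof (cases rule: shear_matrix_nonzero_cases)
      case outside then show False using range that by auto
    qed (use that q_le_n new_crossing_mem in force)+
  qed
  moreover have "shear_matrix n p q m i i = 0" for i using diag unfolding shear_matrix_def by simp
  ultimately show ?thesis unfolding arc_matrix_def using sym_shear_matrix[OF sym] by blast
qed

end

section \<open>The action of the cactus group\<close>

lemma arc_diagrams_iff:
  "(\<sigma>, m) \<in> arc_diagrams n l linf \<longleftrightarrow>
     bij_betw \<sigma> {1..n} {1..n} \<and> (\<forall>k. k \<notin> {1..n} \<longrightarrow> \<sigma> k = k) \<and>
     arc_matrix n m \<and> noncrossing m \<and>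
     (\<forall>i\<in>{1..n}. cut_weight n m {i} = l (\<sigma> i)) \<and> cut_weight n m {0} = linf"
proof -
  have "cut_weight n m {i} = (\<Sum>k\<le>n. m i k)" if "arc_matrix n m" "i \<le> n" for i
    using cut_weight_singleton[of m i n] that unfolding arc_matrix_def by simp
  then show ?thesis
    unfolding arc_diagrams_def arc_matrix_def sym_matrix_def noncrossing_def by auto
qed

context shear_block
begin

lemma cut_weight_shear_singleton:
  assumes sym: "sym_matrix m" and i: "i \<le> n"
  shows "cut_weight n (shear_matrix n p q m) {i} = cut_weight n m {refl_pos p q i}"
proof (cases "i \<in> {p..q}")
  case True
  then show ?thesis using cut_weight_shear_inside[of "{i}" m] by simp
next
  case False
  then show ?thesis using cut_weight_shear_disjoint[OF sym, of "{i}"] i refl_pos_outside by auto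
qed

lemma shear_mem_arc_diagrams:
  assumes x: "(\<sigma>, m) \<in> arc_diagrams n l linf"
  shows "shear n (p, q) (\<sigma>, m) \<in> arc_diagrams n l linf"
proof -
  let ?\<rho> = "refl_pos p q" and ?M = "shear_matrix n p q m"
  have \<sigma>: "bij_betw \<sigma> {1..n} {1..n}" "\<forall>k. k \<notin> {1..n} \<longrightarrow> \<sigma> k = k"
    and m: "arc_matrix n m" "noncrossing m"
    and val: "\<forall>i\<in>{1..n}. cut_weight n m {i} = l (\<sigma> i)" "cut_weight n m {0} = linf"
    using x unfolding arc_diagrams_iff by auto
  have sym: "sym_matrix m" using arc_matrix_sym[OF m(1)] .
  have \<rho>: "bij_betw ?\<rho> {1..n} {1..n}" using bij_betw_refl_pos[OF p_pos q_le_n] .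
  have "bij_betw (\<sigma> \<circ> ?\<rho>) {1..n} {1..n}" using bij_betw_trans[OF \<rho> \<sigma>(1)] .
  moreover have "\<forall>k. k \<notin> {1..n} \<longrightarrow> (\<sigma> \<circ> ?\<rho>) k = k"
    using \<sigma>(2) p_pos q_le_n refl_pos_outside by auto
  moreover have "arc_matrix n ?M" "noncrossing ?M"
    using arc_matrix_shear_matrix[OF m(1)] noncrossing_shear_matrix[OF sym m(2)] by auto
  moreover have "\<forall>i\<in>{1..n}. cut_weight n ?M {i} = l ((\<sigma> \<circ> ?\<rho>) i)"
    using cut_weight_shear_singleton[OF sym] val(1) \<rho> unfolding bij_betw_def by auto
  moreover have "cut_weight n ?M {0} = linf"
    using cut_weight_shear_singleton[OF sym, of 0] val(2) p_pos refl_pos_outside by simp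
  ultimately show ?thesis unfolding shear_Pair arc_diagrams_iff by blast
qed

end

lemma shear_block_if_cactus_gen: "cactus_gen n (p, q) \<Longrightarrow> shear_block n p q"
  unfolding cactus_gen_def by unfold_locales auto

lemma shear_mem_arc_diagrams:
  "cactus_gen n g \<Longrightarrow> x \<in> arc_diagrams n l linf \<Longrightarrow> shear n g x \<in> arc_diagrams n l linf"
  using shear_block.shear_mem_arc_diagrams[OF shear_block_if_cactus_gen]
  by (metis surj_pair)

text \<open>The hypothesis \<open>closed\<close> says that the pieces of an interval compatible with \<open>[p, q]\<close>
  but straddling \<open>[p', q']\<close> are again compatible with \<open>[p, q]\<close>.\<close>
lemma arc_matrix_eq_if_compatible_cuts_eq:
  assumes m: "arc_matrix n m1" "noncrossing m1" "arc_matrix n m2" "noncrossing m2"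
    and B: "shear_block n p q" "shear_block n p' q'"
    and closed: "\<And>a b. 1 \<le> a \<Longrightarrow> a \<le> b \<Longrightarrow> b \<le> n \<Longrightarrow> compatible p q a b \<Longrightarrow>
      \<not> compatible p' q' a b \<Longrightarrow>
       (a < p' \<longrightarrow> compatible p q a (p'-1) \<and> compatible p q p' b \<and> compatible p q (b+1) q' \<and>
          compatible p q p' q' \<and> compatible p q a q') \<and>
       (p' < a \<longrightarrow> compatible p q (q'+1) b \<and> compatible p q a q' \<and> compatible p q p' (a-1) \<and>
          compatible p q p' q' \<and> compatible p q p' b)"
    and eq: "\<And>a b. 1 \<le> a \<Longrightarrow> a \<le> b \<Longrightarrow> b \<le> n \<Longrightarrow> compatible p q a b \<Longrightarrow>
      compatible p' q' a b \<Longrightarrow> cut_weight n m1 {a..b} = cut_weight n m2 {a..b}"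
  shows "m1 = m2"
proof (rule arc_matrix_eq_if_interval_cuts_eq[OF m(1,3)])
  note pq = shear_block.p_pos[OF B(1)] shear_block.p_le_q[OF B(1)] shear_block.q_le_n[OF B(1)]
  note pq' = shear_block.p_pos[OF B(2)] shear_block.p_le_q[OF B(2)] shear_block.q_le_n[OF B(2)]
  have eq_pq: "cut_weight n m1 {a..b} = cut_weight n m2 {a..b}"
    if "1 \<le> a" "a \<le> b" "b \<le> n" "compatible p q a b" for a b
    using cut_weight_eq_if_compatible_eq[where G = "compatible p q", OF m pq' eq closed that] .
  fix a b :: nat assume "1 \<le> a" "a \<le> b" "b \<le> n"
  then show "cut_weight n m1 {a..b} = cut_weight n m2 {a..b}"
    using cut_weight_eq_if_compatible_eq[where G = "\<lambda>_ _. True", OF m pq eq_pq] by blast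
qed

lemma shear_matrix_involutive:
  assumes B: "shear_block n p q" and m: "arc_matrix n m" "noncrossing m"
  shows "shear_matrix n p q (shear_matrix n p q m) = m"
proof -
  interpret shear_block n p q by (rule B)
  let ?M1 = "shear_matrix n p q m"
  have sym: "sym_matrix m" using arc_matrix_sym[OF m(1)] .
  have m1: "arc_matrix n ?M1" "noncrossing ?M1"
    using arc_matrix_shear_matrix[OF m(1)] noncrossing_shear_matrix[OF sym m(2)] .
  have sym1: "sym_matrix ?M1" using arc_matrix_sym[OF m1(1)] .
  show ?thesis
  proof (rule arc_matrix_eq_if_compatible_cuts_eq[OF
        arc_matrix_shear_matrix[OF m1(1)] noncrossing_shear_matrix[OF sym1 m1(2)] m B B])
    fix a b assume ab: "1 \<le> a" "a \<le> b" "b \<le> n" "compatible p q a b"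
    show "cut_weight n (shear_matrix n p q ?M1) {a..b} = cut_weight n m {a..b}"
    proof (cases "p \<le> a \<and> b \<le> q")
      case True
      have "cut_weight n (shear_matrix n p q ?M1) {a..b} = cut_weight n ?M1 {p+q-b..p+q-a}"
        by (rule cut_weight_shear_nested) (use True ab in auto)
      also have "\<dots> = cut_weight n m {p+q-(p+q-a)..p+q-(p+q-b)}"
        by (rule cut_weight_shear_nested) (use True ab in auto)
      also have "{p+q-(p+q-a)..p+q-(p+q-b)} = {a..b}" using True ab by auto
      finally show ?thesis .
    next
      case False
      then show ?thesis using cut_weight_shear_unnested[OF sym1 ab(2,3,4) False]
        cut_weight_shear_unnested[OF sym ab(2,3,4) False] by simp
    qed
  qed simp
qed

lemma cut_weight_shear_disjoint_blocks:
  assumes B: "shear_block n p q" "shear_block n p' q'" and disj: "q < p' \<or> q' < p"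
    and sym: "sym_matrix m" and ab: "a \<le> b" "b \<le> n"
    and c: "compatible p q a b" "compatible p' q' a b" and out: "\<not> (p' \<le> a \<and> b \<le> q')"
  shows "cut_weight n (shear_matrix n p q (shear_matrix n p' q' m)) {a..b}
       = cut_weight n (shear_matrix n p q m) {a..b}"
proof -
  interpret B1: shear_block n p q by (rule B(1))
  interpret B2: shear_block n p' q' by (rule B(2))
  have sym': "sym_matrix (shear_matrix n p' q' m)" using B2.sym_shear_matrix[OF sym] .
  show ?thesis
  proof (cases "p \<le> a \<and> b \<le> q")
    case True
    have c': "compatible p' q' (p+q-b) (p+q-a)" "\<not> (p' \<le> p+q-b \<and> p+q-a \<le> q')"
      using True disj ab(1) unfolding compatible_def by auto
    have "p+q-a \<le> n" using True B1.q_le_n by linarith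
    then show ?thesis
      using B1.cut_weight_shear_nested[of a b] B2.cut_weight_shear_unnested[OF sym _ _ c'] True ab(1)
      by simp
  next
    case False
    then show ?thesis
      using B1.cut_weight_shear_unnested[OF sym' ab c(1)] B1.cut_weight_shear_unnested[OF sym ab c(1)]
        B2.cut_weight_shear_unnested[OF sym ab c(2) out] by simp
  qed
qed

lemma shear_matrix_commute:
  assumes B: "shear_block n p q" "shear_block n p' q'" and disj: "q < p'"
    and m: "arc_matrix n m" "noncrossing m"
  shows "shear_matrix n p q (shear_matrix n p' q' m) = shear_matrix n p' q' (shear_matrix n p q m)"
proof -
  interpret B1: shear_block n p q by (rule B(1))
  interpret B2: shear_block n p' q' by (rule B(2))
  let ?a = "shear_matrix n p' q' m" and ?b = "shear_matrix n p q m"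
  have sym: "sym_matrix m" using arc_matrix_sym[OF m(1)] .
  have a: "arc_matrix n ?a" "noncrossing ?a" and b: "arc_matrix n ?b" "noncrossing ?b"
    using B1.arc_matrix_shear_matrix B2.arc_matrix_shear_matrix
      B1.noncrossing_shear_matrix B2.noncrossing_shear_matrix m sym by auto
  have sym_a: "sym_matrix ?a" and sym_b: "sym_matrix ?b" using a b arc_matrix_sym by auto
  show ?thesis
  proof (rule arc_matrix_eq_if_compatible_cuts_eq[OF
        B1.arc_matrix_shear_matrix[OF a(1)] B1.noncrossing_shear_matrix[OF sym_a a(2)]
        B2.arc_matrix_shear_matrix[OF b(1)] B2.noncrossing_shear_matrix[OF sym_b b(2)] B])
    fix a b assume "1 \<le> a" "a \<le> b" "b \<le> n" "compatible p q a b" "\<not> compatible p' q' a b"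
    then show "(a < p' \<longrightarrow> compatible p q a (p'-1) \<and> compatible p q p' b \<and> compatible p q (b+1) q' \<and>
          compatible p q p' q' \<and> compatible p q a q') \<and>
       (p' < a \<longrightarrow> compatible p q (q'+1) b \<and> compatible p q a q' \<and> compatible p q p' (a-1) \<and>
          compatible p q p' q' \<and> compatible p q p' b)"
      using disj B1.p_le_q B2.p_le_q unfolding compatible_def by auto
  next
    fix a b assume ab: "1 \<le> a" "a \<le> b" "b \<le> n" and c: "compatible p q a b" "compatible p' q' a b"
    show "cut_weight n (shear_matrix n p q ?a) {a..b} = cut_weight n (shear_matrix n p' q' ?b) {a..b}"
    proof (cases "p' \<le> a \<and> b \<le> q'")
      case True
      then have out: "\<not> (p \<le> a \<and> b \<le> q)" using disj ab(2) by auto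
      show ?thesis
        using B1.cut_weight_shear_unnested[OF sym_a ab(2,3) c(1) out]
          cut_weight_shear_disjoint_blocks[OF B(2,1) _ sym ab(2,3) c(2,1) out] disj by auto
    next
      case False
      then show ?thesis
        using cut_weight_shear_disjoint_blocks[OF B _ sym ab(2,3) c False]
          B2.cut_weight_shear_unnested[OF sym_b ab(2,3) c(2) False] disj by auto
    qed
  qed
qed

lemma cut_weight_conjugate_shear_inside:
  assumes B: "shear_block n p q" and pp: "p \<le> p'" "p' < q'" "q' \<le> q" and sym: "sym_matrix m"
    and ab: "p \<le> a" "a \<le> b" "b \<le> q" "compatible (p+q-q') (p+q-p') a b"
  shows "cut_weight n (shear_matrix n p' q' (shear_matrix n p q m)) {p+q-b..p+q-a}
       = cut_weight n (shear_matrix n (p+q-q') (p+q-p') m) {a..b}"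
proof -
  interpret B1: shear_block n p q by (rule B)
  interpret B2: shear_block n p' q' using B1.p_pos B1.q_le_n pp by unfold_locales auto
  interpret B3: shear_block n "p+q-q'" "p+q-p'" using B1.p_pos B1.q_le_n pp by unfold_locales auto
  let ?a = "shear_matrix n p q m"
  define a' b' where "a' = p + q - b" and "b' = p + q - a"
  have ab': "a' + b = p + q" "b' + a = p + q" "p \<le> a'" "a' \<le> b'" "b' \<le> q"
    using ab(1-3) unfolding a'_def b'_def by auto
  show ?thesis
  proof (cases "p' \<le> a' \<and> b' \<le> q'")
    case inside: True
    have "cut_weight n (shear_matrix n p' q' ?a) {a'..b'} = cut_weight n ?a {p'+q'-b'..p'+q'-a'}"
      by (rule B2.cut_weight_shear_nested) (use inside ab' in auto)
    also have "\<dots> = cut_weight n m {p+q-(p'+q'-a')..p+q-(p'+q'-b')}"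
      by (rule B1.cut_weight_shear_nested) (use inside ab' pp in linarith)+
    also have "{p+q-(p'+q'-a')..p+q-(p'+q'-b')} = {(p+q-q')+(p+q-p')-b..(p+q-q')+(p+q-p')-a}"
      using inside ab' pp by (intro arg_cong2[where f = atLeastAtMost]) linarith+
    also have "cut_weight n m {(p+q-q')+(p+q-p')-b..(p+q-q')+(p+q-p')-a}
        = cut_weight n (shear_matrix n (p+q-q') (p+q-p') m) {a..b}"
      by (rule B3.cut_weight_shear_nested[symmetric]) (use inside ab' pp ab(2) in linarith)+
    finally show ?thesis unfolding a'_def b'_def .
  next
    case outside: False
    have c2: "compatible p' q' a' b'"
      using ab(4) ab' pp unfolding compatible_def by linarith
    have "cut_weight n (shear_matrix n p' q' ?a) {a'..b'} = cut_weight n ?a {a'..b'}"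
      by (rule B2.cut_weight_shear_unnested[OF B1.sym_shear_matrix[OF sym] _ _ c2 outside])
        (use ab' B1.q_le_n in linarith)+
    also have "\<dots> = cut_weight n m {p+q-b'..p+q-a'}"
      by (rule B1.cut_weight_shear_nested) (use ab' in linarith)+
    also have "{p+q-b'..p+q-a'} = {a..b}" using ab' by auto
    also have "cut_weight n m {a..b} = cut_weight n (shear_matrix n (p+q-q') (p+q-p') m) {a..b}"
      by (rule B3.cut_weight_shear_unnested[OF sym ab(2) _ ab(4), symmetric])
        (use outside ab' pp B1.q_le_n in linarith)+
    finally show ?thesis unfolding a'_def b'_def .
  qed
qed

lemma cut_weight_conjugate_shear:
  assumes B: "shear_block n p q" and pp: "p \<le> p'" "p' < q'" "q' \<le> q" and sym: "sym_matrix m"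
    and ab: "a \<le> b" "b \<le> n" "compatible p q a b" "compatible (p+q-q') (p+q-p') a b"
  shows "cut_weight n (shear_matrix n p q (shear_matrix n p' q' (shear_matrix n p q m))) {a..b}
       = cut_weight n (shear_matrix n (p+q-q') (p+q-p') m) {a..b}"
proof -
  interpret B1: shear_block n p q by (rule B)
  interpret B2: shear_block n p' q' using B1.p_pos B1.q_le_n pp by unfold_locales auto
  interpret B3: shear_block n "p+q-q'" "p+q-p'" using B1.p_pos B1.q_le_n pp by unfold_locales auto
  let ?a = "shear_matrix n p q m" let ?b = "shear_matrix n p' q' ?a"
  have sym_a: "sym_matrix ?a" and sym_b: "sym_matrix ?b"
    using sym B1.sym_shear_matrix B2.sym_shear_matrix by blast+
  show ?thesis
  proof (cases "p \<le> a \<and> b \<le> q")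
    case True
    then show ?thesis
      using B1.cut_weight_shear_nested[of a b ?b] cut_weight_conjugate_shear_inside[OF B pp sym _ ab(1) _ ab(4)]
        ab(1) by simp
  next
    case False
    have c2: "compatible p' q' a b" and out2: "\<not> (p' \<le> a \<and> b \<le> q')"
      and out3: "\<not> (p+q-q' \<le> a \<and> b \<le> p+q-p')"
      using False ab(3) pp unfolding compatible_def by auto
    show ?thesis
      using B1.cut_weight_shear_unnested[OF sym_b ab(1-3) False]
        B2.cut_weight_shear_unnested[OF sym_a ab(1,2) c2 out2]
        B1.cut_weight_shear_unnested[OF sym ab(1-3) False]
        B3.cut_weight_shear_unnested[OF sym ab(1,2,4) out3]
      by simp
  qed
qed

lemma shear_matrix_conjugate:
  assumes B: "shear_block n p q" and pp: "p \<le> p'" "p' < q'" "q' \<le> q"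
    and m: "arc_matrix n m" "noncrossing m"
  shows "shear_matrix n p q (shear_matrix n p' q' (shear_matrix n p q m))
       = shear_matrix n (p + q - q') (p + q - p') m"
proof -
  interpret B1: shear_block n p q by (rule B)
  interpret B2: shear_block n p' q' using B1.p_pos B1.q_le_n pp by unfold_locales auto
  define p3 q3 where "p3 = p + q - q'" and "q3 = p + q - p'"
  have pq3: "p \<le> p3" "p3 < q3" "q3 \<le> q" using pp unfolding p3_def q3_def by auto
  interpret B3: shear_block n p3 q3 using B1.p_pos B1.q_le_n pq3 by unfold_locales auto
  let ?a = "shear_matrix n p q m" let ?b = "shear_matrix n p' q' ?a"
  have sym: "sym_matrix m" using arc_matrix_sym[OF m(1)] .
  have a: "arc_matrix n ?a" "noncrossing ?a"
    using B1.arc_matrix_shear_matrix B1.noncrossing_shear_matrix m sym by auto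
  then have b: "arc_matrix n ?b" "noncrossing ?b"
    using B2.arc_matrix_shear_matrix B2.noncrossing_shear_matrix arc_matrix_sym by auto
  show ?thesis
    unfolding p3_def[symmetric] q3_def[symmetric]
  proof (rule arc_matrix_eq_if_compatible_cuts_eq[OF
        B1.arc_matrix_shear_matrix[OF b(1)] B1.noncrossing_shear_matrix[OF arc_matrix_sym[OF b(1)] b(2)]
        B3.arc_matrix_shear_matrix[OF m(1)] B3.noncrossing_shear_matrix[OF sym m(2)] B B3.shear_block_axioms])
    fix a b assume "1 \<le> a" "a \<le> b" "b \<le> n" "compatible p q a b" "\<not> compatible p3 q3 a b"
    then have "p \<le> a" "a \<le> b" "b \<le> q" using pq3 unfolding compatible_def by auto
    then show "(a < p3 \<longrightarrow> compatible p q a (p3-1) \<and> compatible p q p3 b \<and>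
          compatible p q (b+1) q3 \<and> compatible p q p3 q3 \<and> compatible p q a q3) \<and>
       (p3 < a \<longrightarrow> compatible p q (q3+1) b \<and> compatible p q a q3 \<and>
          compatible p q p3 (a-1) \<and> compatible p q p3 q3 \<and> compatible p q p3 b)"
      using pq3 by (intro conjI impI compatible_nested) linarith+
  qed (use cut_weight_conjugate_shear[OF B pp sym] in \<open>auto simp: p3_def q3_def\<close>)
qed

lemma shear_involutive:
  assumes "cactus_gen n (p, q)" "x \<in> arc_diagrams n l linf"
  shows "shear n (p, q) (shear n (p, q) x) = x"
proof -
  obtain \<sigma> m where x: "x = (\<sigma>, m)" by (cases x)
  then have "arc_matrix n m" "noncrossing m" using assms(2) arc_diagrams_arc_matrix by auto
  then show ?thesis
    using shear_matrix_involutive[OF shear_block_if_cactus_gen[OF assms(1)]]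
    unfolding x shear_Pair by (simp add: o_def)
qed

lemma shear_commute:
  assumes "cactus_gen n (p, q)" "cactus_gen n (p', q')" "q < p'" "x \<in> arc_diagrams n l linf"
  shows "shear n (p, q) (shear n (p', q') x) = shear n (p', q') (shear n (p, q) x)"
proof -
  obtain \<sigma> m where x: "x = (\<sigma>, m)" by (cases x)
  then have "arc_matrix n m" "noncrossing m" using assms(4) arc_diagrams_arc_matrix by auto
  then show ?thesis
    using shear_matrix_commute[OF shear_block_if_cactus_gen[OF assms(1)]
        shear_block_if_cactus_gen[OF assms(2)] assms(3)] refl_pos_commute[OF assms(3)]
    unfolding x shear_Pair by (simp add: o_def)
qed

lemma shear_conjugate:
  assumes "cactus_gen n (p, q)" "p \<le> p'" "p' < q'" "q' \<le> q" "x \<in> arc_diagrams n l linf"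
  shows "shear n (p, q) (shear n (p', q') (shear n (p, q) x)) = shear n (p + q - q', p + q - p') x"
proof -
  obtain \<sigma> m where x: "x = (\<sigma>, m)" by (cases x)
  then have "arc_matrix n m" "noncrossing m" using assms(5) arc_diagrams_arc_matrix by auto
  then show ?thesis
    using shear_matrix_conjugate[OF shear_block_if_cactus_gen[OF assms(1)] assms(2-4)]
      refl_pos_conjugate[OF assms(2-4)]
    unfolding x shear_Pair by (simp add: o_def)
qed

lemma act_word_append: "act_word n (u @ v) x = act_word n u (act_word n v x)"
  by (induction u) auto

lemma act_word_mem_arc_diagrams:
  "list_all (cactus_gen n) w \<Longrightarrow> x \<in> arc_diagrams n l linf \<Longrightarrow> act_word n w x \<in> arc_diagrams n l linf"
  by (induction w) (auto intro: shear_mem_arc_diagrams)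

lemma act_word_cactus_rel:
  assumes "cactus_rel n u v" "x \<in> arc_diagrams n l linf"
  shows "act_word n u x = act_word n v x"
  using assms(1)
proof cases
  case (comm p q p' q')
  then show ?thesis using shear_commute[of n p q p' q' x] shear_commute[of n p' q' p q x] assms(2)
    by auto
qed (use assms(2) shear_involutive shear_conjugate in auto)

lemma act_word_cactus_eq:
  assumes "cactus_eq n w w'" "x \<in> arc_diagrams n l linf"
  shows "act_word n w x = act_word n w' x"
  using assms
proof (induction arbitrary: x)
  case (rel u v a b)
  then have "act_word n b x \<in> arc_diagrams n l linf" by (intro act_word_mem_arc_diagrams)
  then show ?case using act_word_cactus_rel[OF rel(1)] by (simp add: act_word_append)
qed auto

theorem mainTheorem1:
  fixes n :: nat and l :: "nat \<Rightarrow> nat" and linf :: nat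
  assumes "n \<ge> 2"
  shows "(\<forall>g x. cactus_gen n g \<longrightarrow> x \<in> arc_diagrams n l linf \<longrightarrow>
            shear n g x \<in> arc_diagrams n l linf)
       \<and> (\<forall>w w' x. cactus_eq n w w' \<longrightarrow> x \<in> arc_diagrams n l linf \<longrightarrow>
            act_word n w x = act_word n w' x)
       \<and> (\<forall>p q x. cactus_gen n (p, q) \<longrightarrow> x \<in> arc_diagrams n l linf \<longrightarrow>
            shear n (p, q) (shear n (p, q) x) = x)
       \<and> (\<forall>p q p' q' x. cactus_gen n (p, q) \<longrightarrow> cactus_gen n (p', q') \<longrightarrow>
            (q < p' \<or> q' < p) \<longrightarrow> x \<in> arc_diagrams n l linf \<longrightarrow>
            shear n (p, q) (shear n (p', q') x) = shear n (p', q') (shear n (p, q) x))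
       \<and> (\<forall>p q p' q' x. cactus_gen n (p, q) \<longrightarrow> p \<le> p' \<longrightarrow> p' < q' \<longrightarrow> q' \<le> q \<longrightarrow>
            x \<in> arc_diagrams n l linf \<longrightarrow>
            shear n (p, q) (shear n (p', q') (shear n (p, q) x)) =
            shear n (p + q - q', p + q - p') x)"
proof (intro conjI allI impI)
  fix p q p' q' x
  assume "cactus_gen n (p, q)" "cactus_gen n (p', q')" "q < p' \<or> q' < p" "x \<in> arc_diagrams n l linf"
  then show "shear n (p, q) (shear n (p', q') x) = shear n (p', q') (shear n (p, q) x)"
    using shear_commute[of n p q p' q' x] shear_commute[of n p' q' p q x] by auto
qed (use shear_mem_arc_diagrams act_word_cactus_eq shear_involutive shear_conjugate in auto)

end
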